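(* Let $\mathcal S=\{s_1,\dots,s_n,(p_1,l_1),\dots,(p_m,l_m)\}$ be a configuration. Suppose there exists $f\in F_{\mathcal S}$ such that (1) $\mathcal Z(f)=\{s_1,\dots,s_n,p_1,\dots,p_m\}$; (2) $\operatorname{inp}_f(s_i)=\emptyset$ for all $i=1,\dots,n$; (3) $\operatorname{ord}_{p_j}(f)=2$ for all $j=1,\dots,m$; (4) for each $j=1,\dots,m$, $D_f''(0)\ne0$, where $D_f$ is the discriminant of $f$ at $p_j$ computed in some affine coordinates centered at $p_j$ in which $l_j=\{y=0\}$. Then $\operatorname{span}(F_{\mathcal S})=I_{\mathcal S}$; in particular $\dim I_{\mathcal S}=\dim F_{\mathcal S}$.
   Context: Notation. $H_k\subseteq\mathbb R[x,y,z]$ is the real vector space of ternary forms of degree $k$. For $I\subseteq H_k$ (or a single form), $\mathcal Z(I)$ is the set of common real zeros in $\mathbb P^2(\mathbb R)$. $P_{3,4}=\{f\in H_4: f\ge0\text{ on }\mathbb P^2(\mathbb R)\}$. Local notation. For $p\in\mathbb P^2(\mathbb R)$, affine coordinates centered at $p$ are obtained by an invertible real linear change of coordinates sending $p$ to $(0:0:1)$ followed by setting $z=1$; $f\in H_4$ becomes $f(x,y)=\sum_{i+j\le4}a_{ij}x^iy^j=f_0+\dots+f_4$ ($f_k$ homogeneous of degree $k$), and $\operatorname{ord}_p(f)$ is the least $k$ with $f_k\ne0$. If $\operatorname{ord}_pf\ge2$, put $\tilde f(x,y)=f(x,xy)/x^2=f_2(1,y)+xf_3(1,y)+x^2f_4(1,y)$;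 the set $\operatorname{inp}_f(p)$ of first-order real infinitely near points of $f$ at $p$ is the set of real directions $[u:w]\in\mathbb P^1(\mathbb R)$ with $f_2(u,w)=0$ (all directions if $f_2=0$). The discriminant of $f$ at $p$ is $D_f(y)=(f_3^2-4f_2f_4)(1,y)$. Sets. $F_s=\{f\in P_{3,4}: f(s)=0\}$, $I_s=\{f\in H_4:\operatorname{ord}_sf\ge2\}$. For a real line $l\ni p$, in affine coordinates centered at $p$ with $l=\{y=0\}$: $F_{(p,l)}=\{f\in P_{3,4}: f(p)=0,\ \tilde f(0,0)=0\}$ and $I_{(p,l)}=\{f\in H_4: a_{00}=a_{10}=a_{01}=a_{20}=a_{11}=a_{30}=0\}$. A configuration is $\mathcal S=\{s_1,\dots,s_n,(p_1,l_1),\dots,(p_m,l_m)\}$ with $s_1,\dots,s_n,p_1,\dots,p_m\in\mathbb P^2(\mathbb R)$ pairwise distinct and $l_j$ real lines with $p_j\in l_j$; $F_{\mathcal S}=\bigcap_iF_{s_i}\cap\bigcap_jF_{(p_j,l_j)}$ and $I_{\mathcal S}=\bigcap_iI_{s_i}\cap\bigcap_jI_{(p_j,l_j)}$. *)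

theory Defs
  imports "HOL-Analysis.Analysis" "HOL-Library.Function_Algebras"
          "HOL-Computational_Algebra.Polynomial"
begin

text \<open>Ternary quartic forms are represented as real-valued functions on real^3
  (vector space structure pointwise). Points of P^2(R) are represented by nonzero
  vectors of real^3; real lines by nonzero normal vectors.\<close>

definition fscale :: "real \<Rightarrow> (real^3 \<Rightarrow> real) \<Rightarrow> (real^3 \<Rightarrow> real)" where
  "fscale c f = (\<lambda>v. c * f v)"

definition fspan :: "(real^3 \<Rightarrow> real) set \<Rightarrow> (real^3 \<Rightarrow> real) set" where
  "fspan = module.span fscale"

definition fdim :: "(real^3 \<Rightarrow> real) set \<Rightarrow> nat" where
  "fdim = vector_space.dim fscale"

definition H4 :: "(real^3 \<Rightarrow> real) set" where
  "H4 = {f. \<exists>c::nat \<Rightarrow> nat \<Rightarrow> real. \<forall>v.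
          f v = (\<Sum>i\<le>4. \<Sum>j\<le>4-i. c i j * (v$1)^i * (v$2)^j * (v$3)^(4-i-j))}"

definition P34 :: "(real^3 \<Rightarrow> real) set" where
  "P34 = {f \<in> H4. \<forall>v. 0 \<le> f v}"

definition same_pt :: "real^3 \<Rightarrow> real^3 \<Rightarrow> bool" where
  "same_pt u v \<longleftrightarrow> (\<exists>c. c \<noteq> 0 \<and> u = c *\<^sub>R v)"

definition zero_set :: "(real^3 \<Rightarrow> real) \<Rightarrow> (real^3) set" where
  "zero_set f = {v. v \<noteq> 0 \<and> f v = 0}"

text \<open>B is the inverse of an invertible linear change of coordinates A sending p to
  (0:0:1); the form in the new coordinates is f(B X).\<close>
definition coords_at :: "real^3 \<Rightarrow> real^3^3 \<Rightarrow> bool" where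
  "coords_at p B \<longleftrightarrow> invertible B \<and> same_pt (B *v vector [0, 0, 1]) p"

definition coords_at_line :: "real^3 \<Rightarrow> real^3 \<Rightarrow> real^3^3 \<Rightarrow> bool" where
  "coords_at_line p l B \<longleftrightarrow> coords_at p B \<and> (\<forall>X. l \<bullet> (B *v X) = 0 \<longleftrightarrow> X$2 = 0)"

definition local_coeffs :: "(real^3 \<Rightarrow> real) \<Rightarrow> real^3^3 \<Rightarrow> (nat \<Rightarrow> nat \<Rightarrow> real) \<Rightarrow> bool" where
  "local_coeffs f B a \<longleftrightarrow> (\<forall>i j. 4 < i + j \<longrightarrow> a i j = 0) \<and>
     (\<forall>x y. f (B *v vector [x, y, 1]) = (\<Sum>i\<le>4. \<Sum>j\<le>4. a i j * x^i * y^j))"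

definition hpart :: "(nat \<Rightarrow> nat \<Rightarrow> real) \<Rightarrow> nat \<Rightarrow> real \<Rightarrow> real \<Rightarrow> real" where
  "hpart a k u w = (\<Sum>i\<le>k. a i (k - i) * u^i * w^(k - i))"

definition hpoly :: "(nat \<Rightarrow> nat \<Rightarrow> real) \<Rightarrow> nat \<Rightarrow> real poly" where
  "hpoly a k = (\<Sum>i\<le>k. monom (a i (k - i)) (k - i))"

definition ord_is :: "(nat \<Rightarrow> nat \<Rightarrow> real) \<Rightarrow> nat \<Rightarrow> bool" where
  "ord_is a k \<longleftrightarrow> (\<forall>i j. i + j < k \<longrightarrow> a i j = 0) \<and> (\<exists>i j. i + j = k \<and> a i j \<noteq> 0)"

definition ord_ge :: "(nat \<Rightarrow> nat \<Rightarrow> real) \<Rightarrow> nat \<Rightarrow> bool" where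
  "ord_ge a k \<longleftrightarrow> (\<forall>i j. i + j < k \<longrightarrow> a i j = 0)"

definition tilde :: "(nat \<Rightarrow> nat \<Rightarrow> real) \<Rightarrow> real \<Rightarrow> real \<Rightarrow> real" where
  "tilde a x y = hpart a 2 1 y + x * hpart a 3 1 y + x^2 * hpart a 4 1 y"

text \<open>First-order real infinitely near points: real directions [u:w], represented by
  nonzero pairs, with f_2(u,w) = 0 (all directions if f_2 = 0).\<close>
definition inp :: "(nat \<Rightarrow> nat \<Rightarrow> real) \<Rightarrow> (real \<times> real) set" where
  "inp a = {(u, w). (u, w) \<noteq> (0, 0) \<and> hpart a 2 u w = 0}"

definition disc :: "(nat \<Rightarrow> nat \<Rightarrow> real) \<Rightarrow> real poly" where
  "disc a = (hpoly a 3)^2 - smult 4 (hpoly a 2 * hpoly a 4)"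

definition F_pt :: "real^3 \<Rightarrow> (real^3 \<Rightarrow> real) set" where
  "F_pt s = {f \<in> P34. f s = 0}"

definition I_pt :: "real^3 \<Rightarrow> (real^3 \<Rightarrow> real) set" where
  "I_pt s = {f \<in> H4. \<exists>B a. coords_at s B \<and> local_coeffs f B a \<and> ord_ge a 2}"

definition F_pl :: "real^3 \<Rightarrow> real^3 \<Rightarrow> (real^3 \<Rightarrow> real) set" where
  "F_pl p l = {f \<in> P34. f p = 0 \<and>
     (\<exists>B a. coords_at_line p l B \<and> local_coeffs f B a \<and> tilde a 0 0 = 0)}"

definition I_pl :: "real^3 \<Rightarrow> real^3 \<Rightarrow> (real^3 \<Rightarrow> real) set" where
  "I_pl p l = {f \<in> H4. \<exists>B a. coords_at_line p l B \<and> local_coeffs f B a \<and>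
     a 0 0 = 0 \<and> a 1 0 = 0 \<and> a 0 1 = 0 \<and> a 2 0 = 0 \<and> a 1 1 = 0 \<and> a 3 0 = 0}"

text \<open>Configuration S = {s_0..s_(n-1), (p_0,l_0)..(p_(m-1),l_(m-1))}.\<close>
definition configuration ::
  "nat \<Rightarrow> (nat \<Rightarrow> real^3) \<Rightarrow> nat \<Rightarrow> (nat \<Rightarrow> real^3) \<Rightarrow> (nat \<Rightarrow> real^3) \<Rightarrow> bool" where
  "configuration n s m p l \<longleftrightarrow>
     (\<forall>i<n. s i \<noteq> 0) \<and> (\<forall>j<m. p j \<noteq> 0) \<and>
     (\<forall>i<n. \<forall>i'<n. i \<noteq> i' \<longrightarrow> \<not> same_pt (s i) (s i')) \<and>
     (\<forall>j<m. \<forall>j'<m. j \<noteq> j' \<longrightarrow> \<not> same_pt (p j) (p j')) \<and>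
     (\<forall>i<n. \<forall>j<m. \<not> same_pt (s i) (p j)) \<and>
     (\<forall>j<m. l j \<noteq> 0 \<and> p j \<bullet> l j = 0)"

definition F_S ::
  "nat \<Rightarrow> (nat \<Rightarrow> real^3) \<Rightarrow> nat \<Rightarrow> (nat \<Rightarrow> real^3) \<Rightarrow> (nat \<Rightarrow> real^3) \<Rightarrow> (real^3 \<Rightarrow> real) set" where
  "F_S n s m p l = {f \<in> P34. (\<forall>i<n. f \<in> F_pt (s i)) \<and> (\<forall>j<m. f \<in> F_pl (p j) (l j))}"

definition I_S ::
  "nat \<Rightarrow> (nat \<Rightarrow> real^3) \<Rightarrow> nat \<Rightarrow> (nat \<Rightarrow> real^3) \<Rightarrow> (nat \<Rightarrow> real^3) \<Rightarrow> (real^3 \<Rightarrow> real) set" where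
  "I_S n s m p l = {f \<in> H4. (\<forall>i<n. f \<in> I_pt (s i)) \<and> (\<forall>j<m. f \<in> I_pl (p j) (l j))}"

end

theory Submission
  imports Defs "HOL-Library.Quadratic_Discriminant"
begin

text \<open>A nonnegative quartic vanishing at \<open>s\<close> has order at least 2 there, and one in \<open>F_pl p l\<close>
  satisfies, in coordinates adapted to \<open>(p, l)\<close>, the six conditions defining \<open>I_pl\<close>
  (its jet has weighted order at least 4 for the weights 1 for \<open>x\<close> and 2 for \<open>y\<close>); hence
  \<open>F_S \<subseteq> I_S\<close>. These conditions are equivalent to the growth bounds \<open>O(x^2 + y^2)\<close> and
  \<open>O(x^4 + y^2)\<close> near the center of a chart, which do not depend on the chart; so \<open>I_S\<close> is a
  linear space. Conversely, hypotheses (2) and (4) say that \<open>f\<close> grows at least like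
  \<open>x^2 + y^2\<close> near each \<open>s_i\<close> and like \<open>x^4 + y^2\<close> near each \<open>p_j\<close>, while each
  \<open>g \<in> I_S\<close> is bounded by a multiple of the same weights. Since \<open>f\<close> has no further zeros,
  compactness of the sphere gives \<open>f + \<epsilon> g \<ge> 0\<close> for some \<open>\<epsilon> > 0\<close>, so
  \<open>f + \<epsilon> g \<in> F_S\<close> and \<open>g = ((f + \<epsilon> g) - f) / \<epsilon>\<close> lies in the span of \<open>F_S\<close>.\<close>

section \<open>Quartic forms\<close>

definition quartic :: "(nat \<Rightarrow> nat \<Rightarrow> real) \<Rightarrow> real^3 \<Rightarrow> real" where
  "quartic c v = (\<Sum>i\<le>4. \<Sum>j\<le>4-i. c i j * (v$1)^i * (v$2)^j * (v$3)^(4-i-j))"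

lemma H4_iff_quartic: "g \<in> H4 \<longleftrightarrow> (\<exists>c. g = quartic c)"
  unfolding H4_def quartic_def by (auto simp: fun_eq_iff)

lemma quartic_scaleR: "quartic c (k *\<^sub>R v) = k^4 * quartic c v"
proof -
  have "c i j * (k * v$1)^i * (k * v$2)^j * (k * v$3)^(4-i-j) =
        k^4 * (c i j * (v$1)^i * (v$2)^j * (v$3)^(4-i-j))" if "i + j \<le> 4" for i j
  proof -
    have "k^i * k^j * k^(4-i-j) = k^4" using that by (simp add: power_add[symmetric])
    moreover have "c i j * (k * v$1)^i * (k * v$2)^j * (k * v$3)^(4-i-j) =
          (k^i * k^j * k^(4-i-j)) * (c i j * (v$1)^i * (v$2)^j * (v$3)^(4-i-j))"
      unfolding power_mult_distrib by (simp only: ac_simps)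
    ultimately show ?thesis by simp
  qed
  then show ?thesis
    unfolding quartic_def sum_distrib_left by (intro sum.cong refl) auto
qed

lemma H4_scaleR: "g \<in> H4 \<Longrightarrow> g (k *\<^sub>R v) = k^4 * g v"
  using quartic_scaleR H4_iff_quartic by metis

lemma H4_at_zero: "g \<in> H4 \<Longrightarrow> g 0 = 0"
  using H4_scaleR[of g 0 0] by simp

lemma H4_continuous_on: "g \<in> H4 \<Longrightarrow> continuous_on S g"
  unfolding H4_iff_quartic quartic_def by (auto intro!: continuous_intros)

lemma module_fscale: "module fscale"
  unfolding module_def fscale_def by (auto simp: fun_eq_iff algebra_simps)

lemma vector_space_fscale: "vector_space fscale"
  unfolding vector_space_def fscale_def by (auto simp: fun_eq_iff algebra_simps)

lemma subspace_H4: "module.subspace fscale H4"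
  unfolding module.subspace_def[OF module_fscale]
proof (intro conjI ballI allI)
  show "0 \<in> H4"
    unfolding H4_iff_quartic by (rule exI[of _ "\<lambda>i j. 0"]) (simp add: quartic_def fun_eq_iff)
  fix g h assume "g \<in> H4" "h \<in> H4"
  then obtain c d where "g = quartic c" "h = quartic d" by (auto simp: H4_iff_quartic)
  then have "g + h = quartic (\<lambda>i j. c i j + d i j)"
    by (simp add: quartic_def fun_eq_iff sum.distrib algebra_simps)
  then show "g + h \<in> H4" by (auto simp: H4_iff_quartic)
next
  fix k and g assume "g \<in> H4"
  then obtain c where "g = quartic c" by (auto simp: H4_iff_quartic)
  then have "fscale k g = quartic (\<lambda>i j. k * c i j)"
    by (simp add: quartic_def fscale_def fun_eq_iff sum_distrib_left algebra_simps)
  then show "fscale k g \<in> H4" by (auto simp: H4_iff_quartic)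
qed

lemma H4_add_fscale: "f \<in> H4 \<Longrightarrow> g \<in> H4 \<Longrightarrow> f + fscale c g \<in> H4"
  using subspace_H4 unfolding module.subspace_def[OF module_fscale] by blast

lemma H4_dehomogenize:
  fixes X :: "real^3" and B :: "real^3^3"
  assumes "g \<in> H4" "X$3 \<noteq> 0"
  shows "g (B *v X) = (X$3)^4 * g (B *v vector [X$1 / X$3, X$2 / X$3, 1])"
proof -
  have "X = X$3 *\<^sub>R (vector [X$1 / X$3, X$2 / X$3, 1] :: real^3)"
    using assms(2) by (simp add: vec_eq_iff forall_3 vector_3)
  then have "B *v X = X$3 *\<^sub>R (B *v vector [X$1 / X$3, X$2 / X$3, 1])"
    by (metis matrix_vector_mult_scaleR)
  then show ?thesis
    using H4_scaleR[OF assms(1)] by simp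
qed

lemma H4_vanishes_at_same_pt:
  assumes "g \<in> H4" "same_pt u v"
  shows "g u = 0 \<longleftrightarrow> g v = 0"
  using assms H4_scaleR[OF assms(1)] unfolding same_pt_def by auto

section \<open>Local coefficients\<close>

text \<open>Polynomials in two variables are represented as elements of \<open>real poly poly\<close>, the outer
  variable being \<open>x\<close>.\<close>

definition poly2 :: "real poly poly \<Rightarrow> real \<Rightarrow> real \<Rightarrow> real" where
  "poly2 Q x y = poly (poly Q [:x:]) y"

definition total_degree_le :: "nat \<Rightarrow> real poly poly \<Rightarrow> bool" where
  "total_degree_le n Q \<longleftrightarrow> (\<forall>i j. n < i + j \<longrightarrow> coeff (coeff Q i) j = 0)"

lemma total_degree_le_sum:
  "finite S \<Longrightarrow> (\<And>i. i \<in> S \<Longrightarrow> total_degree_le n (F i)) \<Longrightarrow> total_degree_le n (\<Sum>i\<in>S. F i)"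
  unfolding total_degree_le_def by (auto simp: coeff_sum intro!: sum.neutral)

lemma total_degree_le_mult:
  assumes "total_degree_le m A" "total_degree_le n B"
  shows "total_degree_le (m + n) (A * B)"
  unfolding total_degree_le_def
proof (intro allI impI)
  fix i j assume ij: "m + n < i + j"
  have "coeff (coeff (A * B) i) j =
        (\<Sum>k\<le>i. \<Sum>l\<le>j. coeff (coeff A k) l * coeff (coeff B (i - k)) (j - l))"
    by (simp add: coeff_mult coeff_sum)
  also have "\<dots> = 0"
  proof (intro sum.neutral ballI)
    fix k l assume "k \<in> {..i}" "l \<in> {..j}"
    then have "m < k + l \<or> n < (i - k) + (j - l)" using ij by auto
    then show "coeff (coeff A k) l * coeff (coeff B (i - k)) (j - l) = 0"
      using assms by (auto simp: total_degree_le_def)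
  qed
  finally show "coeff (coeff (A * B) i) j = 0" .
qed

lemma total_degree_le_power: "total_degree_le n A \<Longrightarrow> total_degree_le (k * n) (A ^ k)"
proof (induction k)
  case 0 then show ?case by (simp add: total_degree_le_def coeff_1)
next
  case (Suc k) then show ?case using total_degree_le_mult[of n A "k * n" "A ^ k"] by simp
qed

lemma total_degree_le_linear: "total_degree_le 1 [:[:c, b:], [:a:]:]"
  unfolding total_degree_le_def by (auto simp: coeff_pCons split: nat.splits)

lemma total_degree_le_const: "total_degree_le 0 [:[:c:]:]"
  unfolding total_degree_le_def by (auto simp: coeff_pCons split: nat.splits)

lemma poly_eq_sum_atMost:
  fixes x :: "'a::comm_semiring_1"
  assumes "\<And>i. n < i \<Longrightarrow> coeff p i = 0"
  shows "poly p x = (\<Sum>i\<le>n. coeff p i * x ^ i)"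
proof -
  have d: "degree p \<le> n" using assms by (meson degree_le leI)
  have "poly p x = (\<Sum>i\<le>degree p. coeff p i * x ^ i)" by (rule poly_altdef)
  also have "\<dots> = (\<Sum>i\<le>n. coeff p i * x ^ i)"
    by (rule sum.mono_neutral_left) (use d in \<open>auto simp: coeff_eq_0\<close>)
  finally show ?thesis .
qed

lemma poly2_eq_sum:
  assumes "total_degree_le 4 Q"
  shows "poly2 Q x y = (\<Sum>i\<le>4. \<Sum>j\<le>4. coeff (coeff Q i) j * x^i * y^j)"
proof -
  have "poly Q [:x:] = (\<Sum>i\<le>4. coeff Q i * [:x:] ^ i)"
    by (rule poly_eq_sum_atMost) (use assms in \<open>auto simp: total_degree_le_def poly_eq_iff\<close>)
  then have "poly2 Q x y = (\<Sum>i\<le>4. poly (coeff Q i) y * x ^ i)"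
    by (simp add: poly2_def poly_sum algebra_simps)
  also have "\<dots> = (\<Sum>i\<le>4. (\<Sum>j\<le>4. coeff (coeff Q i) j * y ^ j) * x ^ i)"
    by (intro sum.cong refl, subst poly_eq_sum_atMost[where n=4])
      (use assms in \<open>auto simp: total_degree_le_def\<close>)
  finally show ?thesis by (simp add: sum_distrib_left sum_distrib_right mult_ac)
qed

lemma local_coeffs_exist:
  assumes "g \<in> H4"
  shows "\<exists>a. local_coeffs g B a"
proof -
  obtain c where g: "g = quartic c" using assms by (auto simp: H4_iff_quartic)
  define L where "L k = [:[:B$k$3, B$k$2:], [:B$k$1:]:]" for k :: 3
  define Q where "Q = (\<Sum>i\<le>4. \<Sum>j\<le>4-i. [:[:c i j:]:] * L 1 ^ i * L 2 ^ j * L 3 ^ (4-i-j))"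
  have "total_degree_le 4 Q" unfolding Q_def
  proof (intro total_degree_le_sum finite_atMost)
    fix i j :: nat assume "i \<in> {..4}" "j \<in> {..4-i}"
    then have "0 + i * 1 + j * 1 + (4-i-j) * 1 = (4::nat)" by auto
    with total_degree_le_mult[OF total_degree_le_mult[OF total_degree_le_mult[OF
          total_degree_le_const total_degree_le_power] total_degree_le_power] total_degree_le_power]
    show "total_degree_le 4 ([:[:c i j:]:] * L 1 ^ i * L 2 ^ j * L 3 ^ (4-i-j))"
      unfolding L_def using total_degree_le_linear by metis
  qed
  moreover have "poly2 Q x y = g (B *v vector [x, y, 1])" for x y
  proof -
    have comp: "(B *v vector [x, y, 1]) $ k = poly2 (L k) x y" for k
      by (simp add: L_def poly2_def matrix_vector_mult_def sum_3 vector_3 algebra_simps)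
    show ?thesis
      unfolding g quartic_def comp by (simp add: Q_def poly2_def poly_sum poly_power mult.assoc)
  qed
  ultimately have "local_coeffs g B (\<lambda>i j. coeff (coeff Q i) j)"
    unfolding local_coeffs_def using poly2_eq_sum by (auto simp: total_degree_le_def)
  then show ?thesis by blast
qed

section \<open>Bivariate quartics near the origin\<close>

definition bipoly :: "(nat \<Rightarrow> nat \<Rightarrow> real) \<Rightarrow> real \<Rightarrow> real \<Rightarrow> real" where
  "bipoly a x y = (\<Sum>i\<le>4. \<Sum>j\<le>4. a i j * x^i * y^j)"

definition coeffs_on :: "(nat \<times> nat) set \<Rightarrow> (nat \<Rightarrow> nat \<Rightarrow> real) \<Rightarrow> nat \<Rightarrow> nat \<Rightarrow> real" where
  "coeffs_on A a i j = (if (i, j) \<in> A then a i j else 0)"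

definition coeff_norm :: "(nat \<Rightarrow> nat \<Rightarrow> real) \<Rightarrow> real" where
  "coeff_norm a = (\<Sum>i\<le>4. \<Sum>j\<le>4. \<bar>a i j\<bar>)"

text \<open>Order with respect to the weights 1 for \<open>x\<close> and 2 for \<open>y\<close>; the six conditions in
  the definition of \<open>I_pl\<close> say precisely \<open>weighted_ord_ge a 4\<close>.\<close>

definition weighted_ord_ge :: "(nat \<Rightarrow> nat \<Rightarrow> real) \<Rightarrow> nat \<Rightarrow> bool" where
  "weighted_ord_ge a k \<longleftrightarrow> (\<forall>i j. i + 2 * j < k \<longrightarrow> a i j = 0)"

lemma local_coeffs_bipoly: "local_coeffs g B a \<Longrightarrow> g (B *v vector [x, y, 1]) = bipoly a x y"
  unfolding local_coeffs_def bipoly_def by blast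

lemma local_coeffs_nonneg:
  "local_coeffs g B a \<Longrightarrow> (\<And>v. 0 \<le> g v) \<Longrightarrow> 0 \<le> bipoly a x y"
  using local_coeffs_bipoly by metis

lemma bipoly_0_0: "bipoly a 0 0 = a 0 0"
  by (simp add: bipoly_def eval_nat_numeral atMost_Suc)

lemma coeff_norm_nonneg: "0 \<le> coeff_norm a"
  unfolding coeff_norm_def by (intro sum_nonneg) auto

lemma ord_ge_2_iff: "ord_ge a 2 \<longleftrightarrow> a 0 0 = 0 \<and> a 1 0 = 0 \<and> a 0 1 = 0"
proof -
  have "(i::nat) + j < 2 \<longleftrightarrow> (i = 0 \<and> j = 0) \<or> (i = 1 \<and> j = 0) \<or> (i = 0 \<and> j = 1)" for i j
    by presburger
  then show ?thesis unfolding ord_ge_def by auto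
qed

lemma ord_ge_3_iff: "ord_ge a 3 \<longleftrightarrow> ord_ge a 2 \<and> a 2 0 = 0 \<and> a 1 1 = 0 \<and> a 0 2 = 0"
proof -
  have "(i::nat) + j < 3 \<longleftrightarrow> i + j < 2 \<or> (i = 2 \<and> j = 0) \<or> (i = 1 \<and> j = 1) \<or> (i = 0 \<and> j = 2)"
    for i j by presburger
  then show ?thesis unfolding ord_ge_def by auto
qed

lemma weighted_ord_ge_4_iff:
  "weighted_ord_ge a 4 \<longleftrightarrow> ord_ge a 2 \<and> a 2 0 = 0 \<and> a 1 1 = 0 \<and> a 3 0 = 0"
proof -
  have "(i::nat) + 2 * j < 4 \<longleftrightarrow> i + j < 2 \<or> (i = 2 \<and> j = 0) \<or> (i = 1 \<and> j = 1) \<or> (i = 3 \<and> j = 0)"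
    for i j by presburger
  then show ?thesis unfolding ord_ge_def weighted_ord_ge_def by auto
qed

lemma weighted_ord_ge_5_iff:
  "weighted_ord_ge a 5 \<longleftrightarrow> weighted_ord_ge a 4 \<and> a 4 0 = 0 \<and> a 2 1 = 0 \<and> a 0 2 = 0"
proof -
  have "(i::nat) + 2 * j < 5 \<longleftrightarrow>
      i + 2 * j < 4 \<or> (i = 4 \<and> j = 0) \<or> (i = 2 \<and> j = 1) \<or> (i = 0 \<and> j = 2)"
    for i j by presburger
  then show ?thesis unfolding weighted_ord_ge_def by auto
qed

lemma bipoly_split:
  assumes "A \<subseteq> {..4} \<times> {..4}"
  shows "bipoly a x y =
    (\<Sum>(i, j)\<in>A. a i j * x^i * y^j) + bipoly (coeffs_on (-A) a) x y"
proof -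
  let ?t = "\<lambda>b (i, j). b i j * x^i * y^j"
  have sum: "bipoly b x y = sum (?t b) ({..4} \<times> {..4})" for b
    unfolding bipoly_def sum.cartesian_product by (simp add: case_prod_beta)
  have "sum (?t (coeffs_on A a)) ({..4} \<times> {..4}) = sum (?t a) A"
    by (rule sum.mono_neutral_cong_right) (use assms in \<open>auto simp: coeffs_on_def\<close>)
  moreover have "?t a p = ?t (coeffs_on A a) p + ?t (coeffs_on (-A) a) p" for p
    by (cases p) (simp add: coeffs_on_def algebra_simps)
  ultimately show ?thesis
    unfolding sum by (simp add: sum.distrib)
qed

lemma bipoly_split_linear:
  "bipoly a x y = a 1 0 * x + a 0 1 * y + bipoly (coeffs_on (-{(1,0),(0,1)}) a) x y"
  by (subst bipoly_split[of "{(1,0),(0,1)}"]) auto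

lemma bipoly_split_quadratic: "bipoly a x y = a 2 0 * x^2 + a 1 1 * x * y + a 0 2 * y^2 +
    bipoly (coeffs_on (-{(2,0),(1,1),(0,2)}) a) x y"
  by (subst bipoly_split[of "{(2,0),(1,1),(0,2)}"]) auto

lemma bipoly_split_cubic:
  "bipoly a x y = a 1 1 * x * y + a 3 0 * x^3 + bipoly (coeffs_on (-{(1,1),(3,0)}) a) x y"
  by (subst bipoly_split[of "{(1,1),(3,0)}"]) auto

lemma bipoly_split_weighted_quadratic: "bipoly a x y = a 4 0 * x^4 + a 2 1 * x^2 * y + a 0 2 * y^2 +
    bipoly (coeffs_on (-{(4,0),(2,1),(0,2)}) a) x y"
  by (subst bipoly_split[of "{(4,0),(2,1),(0,2)}"]) auto

lemma bipoly_abs_le: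
  assumes "\<And>i j. i \<le> 4 \<Longrightarrow> j \<le> 4 \<Longrightarrow> a i j \<noteq> 0 \<Longrightarrow> \<bar>x^i * y^j\<bar> \<le> r" "0 \<le> r"
  shows "\<bar>bipoly a x y\<bar> \<le> coeff_norm a * r"
proof -
  have "\<bar>bipoly a x y\<bar> \<le> (\<Sum>i\<le>4. \<Sum>j\<le>4. \<bar>a i j * x^i * y^j\<bar>)"
    unfolding bipoly_def by (rule order_trans[OF sum_abs sum_mono]) (rule sum_abs)
  also have "\<dots> \<le> (\<Sum>i\<le>4. \<Sum>j\<le>4. \<bar>a i j\<bar> * r)"
  proof (intro sum_mono)
    fix i j assume "i \<in> {..4::nat}" "j \<in> {..4::nat}"
    then show "\<bar>a i j * x^i * y^j\<bar> \<le> \<bar>a i j\<bar> * r"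
      using assms(1)[of i j] by (cases "a i j = 0") (auto simp: abs_mult mult_left_mono)
  qed
  also have "\<dots> = coeff_norm a * r" unfolding coeff_norm_def by (simp add: sum_distrib_right)
  finally show ?thesis .
qed

lemma abs_mult_le_sq: "\<bar>x::real\<bar> * \<bar>y\<bar> \<le> x^2 + y^2"
proof -
  have "0 \<le> (\<bar>x\<bar> - \<bar>y\<bar>)^2" by simp
  then have "2 * (\<bar>x\<bar> * \<bar>y\<bar>) \<le> x^2 + y^2" by (simp add: power2_eq_square algebra_simps)
  moreover have "0 \<le> \<bar>x\<bar> * \<bar>y\<bar>" by simp
  ultimately show ?thesis by linarith
qed

lemma sq_mult_abs_le: "(x::real)^2 * \<bar>y\<bar> \<le> x^4 + y^2"
  using abs_mult_le_sq[of "x^2" y] by (simp add: power_mult[symmetric])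

lemma monomial_le_sq:
  fixes x y :: real
  assumes "\<bar>x\<bar> \<le> 1" "\<bar>y\<bar> \<le> 1" "2 \<le> i + j"
  shows "\<bar>x^i * y^j\<bar> \<le> x^2 + y^2"
proof -
  have le1: "\<bar>x\<bar>^k \<le> 1" "\<bar>y\<bar>^k \<le> 1" for k using assms by (auto intro: power_le_one)
  have "\<bar>x^i * y^j\<bar> = \<bar>x\<bar>^i * \<bar>y\<bar>^j" by (simp add: abs_mult power_abs)
  moreover consider "2 \<le> i" | "2 \<le> j" | "i = 1" "j = 1" using assms by linarith
  then have "\<bar>x\<bar>^i * \<bar>y\<bar>^j \<le> x^2 + y^2"
  proof cases
    case 1
    have "\<bar>x\<bar>^i * \<bar>y\<bar>^j \<le> \<bar>x\<bar>^i" using le1(2)[of j] by (simp add: mult_left_le)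
    also have "\<dots> \<le> \<bar>x\<bar>^2" using 1 assms by (intro power_decreasing) auto
    finally have "\<bar>x\<bar>^i * \<bar>y\<bar>^j \<le> x^2" by simp
    then show ?thesis using zero_le_power2[of y] by linarith
  next
    case 2
    have "\<bar>x\<bar>^i * \<bar>y\<bar>^j \<le> \<bar>y\<bar>^j" using le1(1)[of i] by (intro mult_left_le_one_le) auto
    also have "\<dots> \<le> \<bar>y\<bar>^2" using 2 assms by (intro power_decreasing) auto
    finally have "\<bar>x\<bar>^i * \<bar>y\<bar>^j \<le> y^2" by simp
    then show ?thesis using zero_le_power2[of x] by linarith
  next
    case 3
    then show ?thesis using abs_mult_le_sq[of x y] by simp
  qed
  ultimately show ?thesis by simp
qed

lemma monomial_le_weighted:
  fixes x y :: real
  assumes "\<bar>x\<bar> \<le> 1" "\<bar>y\<bar> \<le> 1" "4 \<le> i + 2 * j"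
  shows "\<bar>x^i * y^j\<bar> \<le> x^4 + y^2"
proof -
  have le1: "\<bar>x\<bar>^k \<le> 1" for k using assms by (auto intro: power_le_one)
  have "\<bar>x^i * y^j\<bar> = \<bar>x\<bar>^i * \<bar>y\<bar>^j" by (simp add: abs_mult power_abs)
  moreover consider "2 \<le> j" | "j = 1" "2 \<le> i" | "j = 0" "4 \<le> i" using assms by linarith
  then have "\<bar>x\<bar>^i * \<bar>y\<bar>^j \<le> x^4 + y^2"
  proof cases
    case 1
    have "\<bar>x\<bar>^i * \<bar>y\<bar>^j \<le> \<bar>y\<bar>^j" using le1[of i] by (intro mult_left_le_one_le) auto
    also have "\<dots> \<le> \<bar>y\<bar>^2" using 1 assms by (intro power_decreasing) auto
    finally have "\<bar>x\<bar>^i * \<bar>y\<bar>^j \<le> y^2" by simp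
    moreover have "0 \<le> x^4" by simp
    ultimately show ?thesis by linarith
  next
    case 2
    have "\<bar>x\<bar>^i \<le> \<bar>x\<bar>^2" using 2 assms by (intro power_decreasing) auto
    then have "\<bar>x\<bar>^i * \<bar>y\<bar>^j \<le> x^2 * \<bar>y\<bar>" using 2 by (simp add: mult_right_mono)
    then show ?thesis using sq_mult_abs_le[of x y] by linarith
  next
    case 3
    have "\<bar>x\<bar>^i \<le> \<bar>x\<bar>^4" using 3 assms by (intro power_decreasing) auto
    then have "\<bar>x\<bar>^i * \<bar>y\<bar>^j \<le> x^4" using 3 by (simp add: power_abs)
    then show ?thesis using zero_le_power2[of y] by linarith
  qed
  ultimately show ?thesis by simp
qed

text \<open>The small versions split off one factor \<open>x\<close> or \<open>y\<close> of absolute value at most \<open>e\<close>.\<close>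

lemma monomial_le_sq_small:
  fixes x y :: real
  assumes "\<bar>x\<bar> \<le> e" "\<bar>y\<bar> \<le> e" "e \<le> 1" "3 \<le> i + j"
  shows "\<bar>x^i * y^j\<bar> \<le> e * (x^2 + y^2)"
proof (cases i)
  case 0
  then obtain j' where j: "j = Suc j'" using assms(4) by (cases j) auto
  have "\<bar>x^i * y^j\<bar> = \<bar>y\<bar> * \<bar>x^0 * y^j'\<bar>" using 0 j by (simp add: abs_mult)
  also have "\<dots> \<le> e * (x^2 + y^2)"
    using 0 j assms by (intro mult_mono monomial_le_sq) auto
  finally show ?thesis .
next
  case (Suc i')
  have "\<bar>x^i * y^j\<bar> = \<bar>x\<bar> * \<bar>x^i' * y^j\<bar>" using Suc by (simp add: abs_mult)
  also have "\<dots> \<le> e * (x^2 + y^2)"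
    using Suc assms by (intro mult_mono monomial_le_sq) auto
  finally show ?thesis .
qed

lemma monomial_le_weighted_small:
  fixes x y :: real
  assumes "\<bar>x\<bar> \<le> e" "\<bar>y\<bar> \<le> e" "e \<le> 1" "5 \<le> i + 2 * j"
  shows "\<bar>x^i * y^j\<bar> \<le> e * (x^4 + y^2)"
proof (cases i)
  case 0
  then obtain j' where j: "j = Suc j'" using assms(4) by (cases j) auto
  have "\<bar>x^i * y^j\<bar> = \<bar>y\<bar> * \<bar>x^0 * y^j'\<bar>" using 0 j by (simp add: abs_mult)
  also have "\<dots> \<le> e * (x^4 + y^2)"
    using 0 j assms by (intro mult_mono monomial_le_weighted) (auto simp: add_nonneg_nonneg)
  finally show ?thesis .
next
  case (Suc i')
  have "\<bar>x^i * y^j\<bar> = \<bar>x\<bar> * \<bar>x^i' * y^j\<bar>" using Suc by (simp add: abs_mult)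
  also have "\<dots> \<le> e * (x^4 + y^2)"
    using Suc assms by (intro mult_mono monomial_le_weighted) (auto simp: add_nonneg_nonneg)
  finally show ?thesis .
qed

lemma bipoly_abs_le_sq:
  assumes "ord_ge a 2" "\<bar>x\<bar> \<le> 1" "\<bar>y\<bar> \<le> 1"
  shows "\<bar>bipoly a x y\<bar> \<le> coeff_norm a * (x^2 + y^2)"
proof (rule bipoly_abs_le)
  fix i j assume "a i j \<noteq> 0"
  then have "2 \<le> i + j" using assms(1) unfolding ord_ge_def by (meson not_le)
  then show "\<bar>x^i * y^j\<bar> \<le> x^2 + y^2" using assms(2,3) by (rule monomial_le_sq[rotated -1])
qed simp

lemma bipoly_abs_le_sq_small:
  assumes "ord_ge a 3" "\<bar>x\<bar> \<le> e" "\<bar>y\<bar> \<le> e" "e \<le> 1"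
  shows "\<bar>bipoly a x y\<bar> \<le> coeff_norm a * (e * (x^2 + y^2))"
proof (rule bipoly_abs_le)
  fix i j assume "a i j \<noteq> 0"
  then have "3 \<le> i + j" using assms(1) unfolding ord_ge_def by (meson not_le)
  then show "\<bar>x^i * y^j\<bar> \<le> e * (x^2 + y^2)" using assms(2-4) by (rule monomial_le_sq_small[rotated -1])
next
  show "0 \<le> e * (x^2 + y^2)" using assms(2) by simp
qed

lemma bipoly_abs_le_weighted:
  assumes "weighted_ord_ge a 4" "\<bar>x\<bar> \<le> 1" "\<bar>y\<bar> \<le> 1"
  shows "\<bar>bipoly a x y\<bar> \<le> coeff_norm a * (x^4 + y^2)"
proof (rule bipoly_abs_le)
  fix i j assume "a i j \<noteq> 0"
  then have "4 \<le> i + 2 * j" using assms(1) unfolding weighted_ord_ge_def by (meson not_le)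
  then show "\<bar>x^i * y^j\<bar> \<le> x^4 + y^2" using assms(2,3) by (rule monomial_le_weighted[rotated -1])
qed (simp add: add_nonneg_nonneg)

lemma bipoly_abs_le_weighted_small:
  assumes "weighted_ord_ge a 5" "\<bar>x\<bar> \<le> e" "\<bar>y\<bar> \<le> e" "e \<le> 1"
  shows "\<bar>bipoly a x y\<bar> \<le> coeff_norm a * (e * (x^4 + y^2))"
proof (rule bipoly_abs_le)
  fix i j assume "a i j \<noteq> 0"
  then have "5 \<le> i + 2 * j" using assms(1) unfolding weighted_ord_ge_def by (meson not_le)
  then show "\<bar>x^i * y^j\<bar> \<le> e * (x^4 + y^2)"
    using assms(2-4) by (rule monomial_le_weighted_small[rotated -1])
next
  show "0 \<le> e * (x^4 + y^2)" using assms(2) by (simp add: add_nonneg_nonneg)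
qed

section \<open>Coefficients forced by nonnegativity or by growth bounds\<close>

lemma exists_small_pos:
  fixes c K :: real
  assumes "0 < c" "0 < \<delta>"
  obtains t where "0 < t" "t \<le> \<delta>" "\<bar>K\<bar> * t < c"
proof
  define t where "t = min \<delta> (c / (2 * (\<bar>K\<bar> + 1)))"
  show t0: "0 < t" "t \<le> \<delta>" using assms by (auto simp: t_def)
  have "t \<le> c / (2 * (\<bar>K\<bar> + 1))" by (simp add: t_def)
  then have "\<bar>K\<bar> * t + t \<le> c / 2" by (simp add: field_simps)
  then show "\<bar>K\<bar> * t < c" using t0 assms by linarith
qed

lemma lowest_coeff_nonneg:
  fixes c :: real and r :: "real \<Rightarrow> real"
  assumes "0 < \<delta>"
    and nonneg: "\<And>t. 0 < t \<Longrightarrow> t \<le> \<delta> \<Longrightarrow> 0 \<le> c * t^n + r t"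
    and rest: "\<And>t. 0 < t \<Longrightarrow> t \<le> \<delta> \<Longrightarrow> \<bar>r t\<bar> \<le> S * t^(n+1)"
  shows "0 \<le> c"
proof (rule ccontr)
  assume "\<not> 0 \<le> c"
  then obtain t where t: "0 < t" "t \<le> \<delta>" "\<bar>S\<bar> * t < -c"
    using exists_small_pos[of "-c" \<delta> S] assms(1) by auto
  have "-c * t^n \<le> (S * t) * t^n" using nonneg[of t] rest[of t] t by (simp add: algebra_simps)
  then have "-c \<le> S * t" by (rule mult_right_le_imp_le) (use t in auto)
  moreover have "S * t \<le> \<bar>S\<bar> * t" using t by (intro mult_right_mono) auto
  ultimately show False using t by linarith
qed

lemma lowest_coeff_eq_0:
  fixes c :: real and r :: "real \<Rightarrow> real"
  assumes "0 < \<delta>"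
    and bound: "\<And>t. 0 < \<bar>t\<bar> \<Longrightarrow> \<bar>t\<bar> \<le> \<delta> \<Longrightarrow> \<bar>c * t^n + r t\<bar> \<le> K * \<bar>t\<bar>^(n+1)"
    and rest: "\<And>t. 0 < \<bar>t\<bar> \<Longrightarrow> \<bar>t\<bar> \<le> \<delta> \<Longrightarrow> \<bar>r t\<bar> \<le> S * \<bar>t\<bar>^(n+1)"
  shows "c = 0"
proof (rule ccontr)
  assume "c \<noteq> 0"
  then obtain t where t: "0 < t" "t \<le> \<delta>" "\<bar>K + S\<bar> * t < \<bar>c\<bar>"
    using exists_small_pos[of "\<bar>c\<bar>" \<delta> "K + S"] assms(1) by auto
  have "\<bar>c * t^n\<bar> \<le> \<bar>c * t^n + r t\<bar> + \<bar>r t\<bar>" by linarith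
  also have "\<dots> \<le> (K + S) * t^(n+1)" using bound[of t] rest[of t] t by (simp add: algebra_simps)
  finally have "\<bar>c\<bar> * t^n \<le> ((K + S) * t) * t^n" using t by (simp add: abs_mult algebra_simps)
  then have "\<bar>c\<bar> \<le> (K + S) * t" using t by simp
  moreover have "(K + S) * t \<le> \<bar>K + S\<bar> * t" using t by (intro mult_right_mono) auto
  ultimately show False using t by linarith
qed

lemma odd_lowest_coeff_eq_0:
  fixes c :: real and r :: "real \<Rightarrow> real"
  assumes "odd n" "0 < \<delta>"
    and nonneg: "\<And>t. 0 < \<bar>t\<bar> \<Longrightarrow> \<bar>t\<bar> \<le> \<delta> \<Longrightarrow> 0 \<le> c * t^n + r t"
    and rest: "\<And>t. 0 < \<bar>t\<bar> \<Longrightarrow> \<bar>t\<bar> \<le> \<delta> \<Longrightarrow> \<bar>r t\<bar> \<le> S * \<bar>t\<bar>^(n+1)"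
  shows "c = 0"
proof -
  have "0 \<le> c"
  proof (rule lowest_coeff_nonneg[OF assms(2), of c n r S])
    fix t :: real assume "0 < t" "t \<le> \<delta>"
    then show "0 \<le> c * t ^ n + r t" "\<bar>r t\<bar> \<le> S * t ^ (n + 1)"
      using nonneg[of t] rest[of t] by simp_all
  qed
  moreover have "0 \<le> -c"
  proof (rule lowest_coeff_nonneg[OF assms(2), of "-c" n "\<lambda>t. r (-t)" S])
    fix t :: real assume "0 < t" "t \<le> \<delta>"
    then show "0 \<le> -c * t ^ n + r (-t)" "\<bar>r (-t)\<bar> \<le> S * t ^ (n + 1)"
      using nonneg[of "-t"] rest[of "-t"] assms(1) by (simp_all add: power_minus_odd)
  qed
  ultimately show ?thesis by simp
qed

lemma bipoly_nonneg_ord_ge_2: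
  assumes nonneg: "\<And>x y. 0 \<le> bipoly a x y" and "a 0 0 = 0"
  shows "ord_ge a 2"
proof -
  let ?r = "coeffs_on (-{(1,0),(0,1)}) a"
  have r: "ord_ge ?r 2" using assms(2) by (simp add: ord_ge_2_iff coeffs_on_def)
  have "a 1 0 = 0"
  proof (rule odd_lowest_coeff_eq_0[of 1 1 "a 1 0" "\<lambda>t. bipoly ?r t 0" "coeff_norm ?r"])
    fix t :: real assume "0 < \<bar>t\<bar>" "\<bar>t\<bar> \<le> 1"
    show "0 \<le> a 1 0 * t ^ 1 + bipoly ?r t 0" using nonneg[of t 0] bipoly_split_linear[of a t 0] by simp
    show "\<bar>bipoly ?r t 0\<bar> \<le> coeff_norm ?r * \<bar>t\<bar> ^ (1 + 1)"
      using bipoly_abs_le_sq[OF r \<open>\<bar>t\<bar> \<le> 1\<close>, of 0] by (simp add: power2_eq_square)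
  qed auto
  moreover have "a 0 1 = 0"
  proof (rule odd_lowest_coeff_eq_0[of 1 1 "a 0 1" "\<lambda>t. bipoly ?r 0 t" "coeff_norm ?r"])
    fix t :: real assume "0 < \<bar>t\<bar>" "\<bar>t\<bar> \<le> 1"
    show "0 \<le> a 0 1 * t ^ 1 + bipoly ?r 0 t" using nonneg[of 0 t] bipoly_split_linear[of a 0 t] by simp
    show "\<bar>bipoly ?r 0 t\<bar> \<le> coeff_norm ?r * \<bar>t\<bar> ^ (1 + 1)"
      using bipoly_abs_le_sq[OF r _ \<open>\<bar>t\<bar> \<le> 1\<close>, of 0] by (simp add: power2_eq_square)
  qed auto
  ultimately show ?thesis using assms(2) by (simp add: ord_ge_2_iff)
qed

text \<open>Along the curves \<open>(t, 0)\<close> and \<open>(t, t^2)\<close> the lowest terms are \<open>a 3 0 * t^3\<close> and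
  \<open>(a 1 1 + a 3 0) * t^3\<close>.\<close>

lemma bipoly_nonneg_weighted_ord_ge_4:
  assumes nonneg: "\<And>x y. 0 \<le> bipoly a x y" and "ord_ge a 2" "a 2 0 = 0"
  shows "weighted_ord_ge a 4"
proof -
  let ?r = "coeffs_on (-{(1,1),(3,0)}) a"
  have r: "weighted_ord_ge ?r 4" using assms(2,3) by (simp add: weighted_ord_ge_4_iff ord_ge_2_iff coeffs_on_def)
  have a30: "a 3 0 = 0"
  proof (rule odd_lowest_coeff_eq_0[of 3 1 "a 3 0" "\<lambda>t. bipoly ?r t 0" "coeff_norm ?r"])
    fix t :: real assume "0 < \<bar>t\<bar>" "\<bar>t\<bar> \<le> 1"
    show "0 \<le> a 3 0 * t ^ 3 + bipoly ?r t 0" using nonneg[of t 0] bipoly_split_cubic[of a t 0] by simp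
    show "\<bar>bipoly ?r t 0\<bar> \<le> coeff_norm ?r * \<bar>t\<bar> ^ (3 + 1)"
      using bipoly_abs_le_weighted[OF r \<open>\<bar>t\<bar> \<le> 1\<close>, of 0] by simp
  qed auto
  have "a 1 1 + a 3 0 = 0"
  proof (rule odd_lowest_coeff_eq_0[of 3 1 "a 1 1 + a 3 0" "\<lambda>t. bipoly ?r t (t^2)" "2 * coeff_norm ?r"])
    fix t :: real assume t: "0 < \<bar>t\<bar>" "\<bar>t\<bar> \<le> 1"
    show "0 \<le> (a 1 1 + a 3 0) * t ^ 3 + bipoly ?r t (t^2)"
      using nonneg[of t "t^2"] bipoly_split_cubic[of a t "t^2"]
      by (simp add: algebra_simps power2_eq_square power3_eq_cube)
    have "\<bar>t^2\<bar> \<le> 1" using t by (simp add: abs_square_le_1)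
    then have "\<bar>bipoly ?r t (t^2)\<bar> \<le> coeff_norm ?r * (t^4 + (t^2)^2)"
      by (rule bipoly_abs_le_weighted[OF r \<open>\<bar>t\<bar> \<le> 1\<close>])
    then show "\<bar>bipoly ?r t (t^2)\<bar> \<le> 2 * coeff_norm ?r * \<bar>t\<bar> ^ (3 + 1)"
      by (simp add: power_abs[symmetric] power_mult[symmetric])
  qed auto
  then show ?thesis using assms(2,3) a30 by (simp add: weighted_ord_ge_4_iff)
qed

lemma ord_ge_2_if_bipoly_bounded:
  assumes "0 < \<delta>" and bound: "\<And>x y. \<bar>x\<bar> \<le> \<delta> \<Longrightarrow> \<bar>y\<bar> \<le> \<delta> \<Longrightarrow> \<bar>bipoly a x y\<bar> \<le> K * (x^2 + y^2)"
  shows "ord_ge a 2"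
proof -
  have a00: "a 0 0 = 0" using bound[of 0 0] assms(1) by (simp add: bipoly_0_0)
  let ?r = "coeffs_on (-{(1,0),(0,1)}) a"
  have r: "ord_ge ?r 2" using a00 by (simp add: ord_ge_2_iff coeffs_on_def)
  have d: "0 < min \<delta> 1" using assms(1) by simp
  have "a 1 0 = 0"
  proof (rule lowest_coeff_eq_0[OF d, of "a 1 0" 1 "\<lambda>t. bipoly ?r t 0" K "coeff_norm ?r"])
    fix t :: real assume t: "0 < \<bar>t\<bar>" "\<bar>t\<bar> \<le> min \<delta> 1"
    show "\<bar>a 1 0 * t ^ 1 + bipoly ?r t 0\<bar> \<le> K * \<bar>t\<bar> ^ (1 + 1)"
      using bound[of t 0] bipoly_split_linear[of a t 0] t assms(1) by (simp add: power2_eq_square)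
    show "\<bar>bipoly ?r t 0\<bar> \<le> coeff_norm ?r * \<bar>t\<bar> ^ (1 + 1)"
      using bipoly_abs_le_sq[OF r, of t 0] t by (simp add: power2_eq_square)
  qed
  moreover have "a 0 1 = 0"
  proof (rule lowest_coeff_eq_0[OF d, of "a 0 1" 1 "\<lambda>t. bipoly ?r 0 t" K "coeff_norm ?r"])
    fix t :: real assume t: "0 < \<bar>t\<bar>" "\<bar>t\<bar> \<le> min \<delta> 1"
    show "\<bar>a 0 1 * t ^ 1 + bipoly ?r 0 t\<bar> \<le> K * \<bar>t\<bar> ^ (1 + 1)"
      using bound[of 0 t] bipoly_split_linear[of a 0 t] t assms(1) by (simp add: power2_eq_square)
    show "\<bar>bipoly ?r 0 t\<bar> \<le> coeff_norm ?r * \<bar>t\<bar> ^ (1 + 1)"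
      using bipoly_abs_le_sq[OF r, of 0 t] t by (simp add: power2_eq_square)
  qed
  ultimately show ?thesis using a00 by (simp add: ord_ge_2_iff)
qed

lemma axis_coeffs_eq_0_if_bipoly_bounded:
  assumes "0 < \<delta>" "\<delta> \<le> 1" "ord_ge a 2"
    and axis: "\<And>t. \<bar>t\<bar> \<le> \<delta> \<Longrightarrow> \<bar>bipoly a t 0\<bar> \<le> K * \<bar>t\<bar>^4"
  shows "a 2 0 = 0" "a 3 0 = 0"
proof -
  have axis': "\<bar>bipoly a t 0\<bar> \<le> \<bar>K\<bar> * \<bar>t\<bar>^n" if "\<bar>t\<bar> \<le> \<delta>" "n \<le> 4" for t n
  proof -
    have "\<bar>t\<bar>^4 \<le> \<bar>t\<bar>^n" using that assms(2) by (intro power_decreasing) auto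
    then have "K * \<bar>t\<bar>^4 \<le> \<bar>K\<bar> * \<bar>t\<bar>^n" by (intro mult_mono) auto
    then show ?thesis using axis[OF that(1)] by linarith
  qed
  let ?r2 = "coeffs_on (-{(2,0),(1,1),(0,2)}) a"
  have r2: "ord_ge ?r2 3" using assms(3) by (simp add: ord_ge_3_iff ord_ge_2_iff coeffs_on_def)
  show a20: "a 2 0 = 0"
  proof (rule lowest_coeff_eq_0[OF assms(1), of "a 2 0" 2 "\<lambda>t. bipoly ?r2 t 0" "\<bar>K\<bar>" "coeff_norm ?r2"])
    fix t :: real assume t: "0 < \<bar>t\<bar>" "\<bar>t\<bar> \<le> \<delta>"
    show "\<bar>a 2 0 * t ^ 2 + bipoly ?r2 t 0\<bar> \<le> \<bar>K\<bar> * \<bar>t\<bar> ^ (2 + 1)"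
      using axis'[OF t(2), of 3] bipoly_split_quadratic[of a t 0] by simp
    have "\<bar>bipoly ?r2 t 0\<bar> \<le> coeff_norm ?r2 * (\<bar>t\<bar> * (t^2 + 0^2))"
      using bipoly_abs_le_sq_small[OF r2, of t "\<bar>t\<bar>" 0] t assms(2) by simp
    then show "\<bar>bipoly ?r2 t 0\<bar> \<le> coeff_norm ?r2 * \<bar>t\<bar> ^ (2 + 1)"
      by (simp add: power2_eq_square power3_eq_cube abs_mult_self_eq)
  qed
  let ?r3 = "coeffs_on (-{(1,1),(3,0)}) a"
  have r3: "weighted_ord_ge ?r3 4"
    using assms(3) a20 by (simp add: weighted_ord_ge_4_iff ord_ge_2_iff coeffs_on_def)
  show "a 3 0 = 0"
  proof (rule lowest_coeff_eq_0[OF assms(1), of "a 3 0" 3 "\<lambda>t. bipoly ?r3 t 0" "\<bar>K\<bar>" "coeff_norm ?r3"])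
    fix t :: real assume t: "0 < \<bar>t\<bar>" "\<bar>t\<bar> \<le> \<delta>"
    show "\<bar>a 3 0 * t ^ 3 + bipoly ?r3 t 0\<bar> \<le> \<bar>K\<bar> * \<bar>t\<bar> ^ (3 + 1)"
      using axis'[OF t(2), of 4] bipoly_split_cubic[of a t 0] by simp
    show "\<bar>bipoly ?r3 t 0\<bar> \<le> coeff_norm ?r3 * \<bar>t\<bar> ^ (3 + 1)"
      using bipoly_abs_le_weighted[OF r3, of t 0] t assms(2) by simp
  qed
qed

text \<open>The bound gives \<open>ord_ge a 2\<close> since \<open>x^4 \<le> x^2\<close> near 0; along the axis it forces
  \<open>a 2 0 = a 3 0 = 0\<close>, and along \<open>(t, t^2)\<close> then \<open>a 1 1 = 0\<close>.\<close>

lemma weighted_ord_ge_4_if_bipoly_bounded: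
  assumes "0 < \<delta>" and bound: "\<And>x y. \<bar>x\<bar> \<le> \<delta> \<Longrightarrow> \<bar>y\<bar> \<le> \<delta> \<Longrightarrow> \<bar>bipoly a x y\<bar> \<le> K * (x^4 + y^2)"
  shows "weighted_ord_ge a 4"
proof -
  define \<delta>' where "\<delta>' = min \<delta> 1"
  have d: "0 < \<delta>'" "\<delta>' \<le> 1" using assms(1) by (simp_all add: \<delta>'_def)
  have bound': "\<bar>bipoly a x y\<bar> \<le> \<bar>K\<bar> * (x^4 + y^2)" if "\<bar>x\<bar> \<le> \<delta>'" "\<bar>y\<bar> \<le> \<delta>'" for x y
  proof -
    have "K * (x^4 + y^2) \<le> \<bar>K\<bar> * (x^4 + y^2)" by (intro mult_right_mono) auto
    then show ?thesis using bound[of x y] that by (simp add: \<delta>'_def)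
  qed
  have "\<bar>bipoly a x y\<bar> \<le> \<bar>K\<bar> * (x^2 + y^2)" if "\<bar>x\<bar> \<le> \<delta>'" "\<bar>y\<bar> \<le> \<delta>'" for x y
  proof -
    have "\<bar>x\<bar>^4 \<le> \<bar>x\<bar>^2" using that d by (intro power_decreasing) auto
    then have "\<bar>K\<bar> * (x^4 + y^2) \<le> \<bar>K\<bar> * (x^2 + y^2)" by (intro mult_left_mono) (auto simp: power_abs)
    then show ?thesis using bound'[OF that] by linarith
  qed
  then have o2: "ord_ge a 2" by (rule ord_ge_2_if_bipoly_bounded[OF d(1)])
  have axis: "\<bar>bipoly a t 0\<bar> \<le> \<bar>K\<bar> * \<bar>t\<bar>^4" if "\<bar>t\<bar> \<le> \<delta>'" for t
    using bound'[of t 0] that d by simp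
  have a20: "a 2 0 = 0" by (rule axis_coeffs_eq_0_if_bipoly_bounded(1)[OF d o2 axis])
  have a30: "a 3 0 = 0" by (rule axis_coeffs_eq_0_if_bipoly_bounded(2)[OF d o2 axis])
  let ?r3 = "coeffs_on (-{(1,1),(3,0)}) a"
  have r3: "weighted_ord_ge ?r3 4"
    using o2 a20 by (simp add: weighted_ord_ge_4_iff ord_ge_2_iff coeffs_on_def)
  have "a 1 1 + a 3 0 = 0"
  proof (rule lowest_coeff_eq_0[OF d(1), of "a 1 1 + a 3 0" 3 "\<lambda>t. bipoly ?r3 t (t^2)" "2 * \<bar>K\<bar>"
        "2 * coeff_norm ?r3"])
    fix t :: real assume t: "0 < \<bar>t\<bar>" "\<bar>t\<bar> \<le> \<delta>'"
    have t1: "\<bar>t\<bar> \<le> 1" using t d by simp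
    have "\<bar>t\<bar> * \<bar>t\<bar> \<le> \<bar>t\<bar> * 1" using t1 by (intro mult_left_mono) auto
    then have t2: "\<bar>t^2\<bar> \<le> \<bar>t\<bar>" by (simp add: power2_eq_square abs_mult)
    have "\<bar>bipoly a t (t^2)\<bar> \<le> \<bar>K\<bar> * (t^4 + (t^2)^2)" using bound'[of t "t^2"] t t2 by simp
    also have "\<dots> = 2 * \<bar>K\<bar> * \<bar>t\<bar> ^ (3 + 1)" by (simp add: power_mult[symmetric])
    finally show "\<bar>(a 1 1 + a 3 0) * t ^ 3 + bipoly ?r3 t (t^2)\<bar> \<le> 2 * \<bar>K\<bar> * \<bar>t\<bar> ^ (3 + 1)"
      using bipoly_split_cubic[of a t "t^2"] by (simp add: algebra_simps power2_eq_square power3_eq_cube)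
    have "\<bar>bipoly ?r3 t (t^2)\<bar> \<le> coeff_norm ?r3 * (t^4 + (t^2)^2)"
      using t1 t2 by (intro bipoly_abs_le_weighted[OF r3 t1]) simp
    also have "\<dots> = 2 * coeff_norm ?r3 * \<bar>t\<bar> ^ (3 + 1)" by (simp add: power_mult[symmetric])
    finally show "\<bar>bipoly ?r3 t (t^2)\<bar> \<le> 2 * coeff_norm ?r3 * \<bar>t\<bar> ^ (3 + 1)" .
  qed
  then show ?thesis using o2 a20 a30 by (simp add: weighted_ord_ge_4_iff)
qed

section \<open>Lower bounds near the origin\<close>

lemma quadratic_form_ge:
  fixes \<alpha> \<beta> \<gamma> :: real
  assumes "0 < \<alpha>" "\<beta>^2 < 4 * \<alpha> * \<gamma>"
  shows "\<exists>c>0. \<forall>U V. c * (U^2 + V^2) \<le> \<alpha> * U^2 + \<beta> * U * V + \<gamma> * V^2"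
proof -
  define d where "d = 4 * \<alpha> * \<gamma> - \<beta>^2"
  have d0: "0 < d" using assms by (simp add: d_def)
  have g0: "0 < \<gamma>"
  proof (rule ccontr)
    assume "\<not> 0 < \<gamma>"
    then have "4 * \<alpha> * \<gamma> \<le> 0" using assms(1) by (simp add: mult_nonneg_nonpos)
    then show False using assms(2) zero_le_power2[of \<beta>] by linarith
  qed
  have "d / (4 * (\<alpha> + \<gamma>)) * (U^2 + V^2) \<le> \<alpha> * U^2 + \<beta> * U * V + \<gamma> * V^2" for U V
  proof -
    let ?Q = "\<alpha> * U^2 + \<beta> * U * V + \<gamma> * V^2"
    \<comment> \<open>completing the square in \<open>U\<close> and in \<open>V\<close>\<close>
    have "4 * \<alpha> * ?Q = (2 * \<alpha> * U + \<beta> * V)^2 + d * V^2"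
      and "4 * \<gamma> * ?Q = (2 * \<gamma> * V + \<beta> * U)^2 + d * U^2"
      by (simp_all add: d_def power2_eq_square algebra_simps)
    then have "d * V^2 \<le> 4 * \<alpha> * ?Q" "d * U^2 \<le> 4 * \<gamma> * ?Q" by simp_all
    then have "d * (U^2 + V^2) \<le> (4 * (\<alpha> + \<gamma>)) * ?Q" by (simp add: algebra_simps)
    then show ?thesis using assms g0 by (simp add: field_simps)
  qed
  then show ?thesis using d0 assms g0 by (intro exI[of _ "d / (4 * (\<alpha> + \<gamma>))"]) auto
qed

lemma discrim_le_if_nonneg:
  fixes \<alpha> \<beta> \<gamma> :: real
  assumes nonneg: "\<And>v. 0 \<le> \<alpha> + \<beta> * v + \<gamma> * v^2"
  shows "\<beta>^2 \<le> 4 * \<alpha> * \<gamma>"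
proof -
  have a0: "0 \<le> \<alpha>" using nonneg[of 0] by simp
  have g0: "0 \<le> \<gamma>"
  proof (rule ccontr)
    assume "\<not> 0 \<le> \<gamma>"
    define v where "v = (\<alpha> + \<bar>\<beta>\<bar> + 1) / (-\<gamma>) + 1"
    have "0 \<le> (\<alpha> + \<bar>\<beta>\<bar> + 1) / (-\<gamma>)" using \<open>\<not> 0 \<le> \<gamma>\<close> a0 by (intro divide_nonneg_pos) auto
    then have v1: "1 \<le> v" unfolding v_def by linarith
    have "\<alpha> + \<bar>\<beta>\<bar> + 1 \<le> (-\<gamma>) * v" using \<open>\<not> 0 \<le> \<gamma>\<close> by (simp add: v_def field_simps)
    then have h: "(\<alpha> + \<bar>\<beta>\<bar>) + \<gamma> * v \<le> -1" by (simp add: algebra_simps)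
    have "\<alpha> + \<beta> * v + \<gamma> * v^2 \<le> \<alpha> * v + \<bar>\<beta>\<bar> * v + \<gamma> * v^2"
      using v1 a0 by (smt (verit) abs_ge_self mult_left_mono mult_right_mono mult.commute mult_cancel_left1)
    also have "\<dots> = v * ((\<alpha> + \<bar>\<beta>\<bar>) + \<gamma> * v)" by (simp add: power2_eq_square algebra_simps)
    also have "\<dots> \<le> v * (-1)" using h v1 by (intro mult_left_mono) auto
    finally show False using nonneg[of v] v1 by linarith
  qed
  show ?thesis
  proof (cases "\<gamma> = 0")
    case True
    then have "\<beta> = 0" using nonneg[of "-(\<alpha> + 1) / \<beta>"] by (cases "\<beta> = 0") auto
    then show ?thesis using True by simp
  next
    case False
    then have g: "0 < \<gamma>" using g0 by simp
    have "0 \<le> \<alpha> + \<beta> * (-\<beta> / (2 * \<gamma>)) + \<gamma> * (-\<beta> / (2 * \<gamma>))^2" by (rule nonneg)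
    also have "\<dots> = (4 * \<alpha> * \<gamma> - \<beta>^2) / (4 * \<gamma>)" using g by (simp add: field_simps power2_eq_square)
    finally show ?thesis using g by (simp add: le_divide_eq)
  qed
qed

lemma lower_bound_near_0:
  fixes \<rho> Q R :: "real \<Rightarrow> real \<Rightarrow> real"
  assumes "0 < c" "0 \<le> S" and principal: "\<And>x y. c * \<rho> x y \<le> Q x y" and "\<And>x y. 0 \<le> \<rho> x y"
    and rest: "\<And>x y e. \<bar>x\<bar> \<le> e \<Longrightarrow> \<bar>y\<bar> \<le> e \<Longrightarrow> e \<le> 1 \<Longrightarrow> \<bar>R x y\<bar> \<le> S * (e * \<rho> x y)"
  shows "\<exists>\<delta>>0. \<exists>c'>0. \<forall>x y. \<bar>x\<bar> \<le> \<delta> \<longrightarrow> \<bar>y\<bar> \<le> \<delta> \<longrightarrow> c' * \<rho> x y \<le> Q x y + R x y"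
proof (intro exI conjI allI impI)
  define \<delta> where "\<delta> = min 1 (c / (2 * (S + 1)))"
  show "0 < \<delta>" "0 < c / 2" using assms(1,2) by (simp_all add: \<delta>_def)
  have "S * \<delta> \<le> (S + 1) * (c / (2 * (S + 1)))"
    using assms(1,2) by (intro mult_mono) (auto simp: \<delta>_def)
  also have "\<dots> = c / 2" using assms(2) by (simp add: field_simps)
  finally have S\<delta>: "S * \<delta> \<le> c / 2" .
  fix x y assume "\<bar>x\<bar> \<le> \<delta>" "\<bar>y\<bar> \<le> \<delta>"
  then have "\<bar>R x y\<bar> \<le> (S * \<delta>) * \<rho> x y" using rest[of x \<delta> y] by (simp add: \<delta>_def)
  also have "\<dots> \<le> c / 2 * \<rho> x y" using S\<delta> assms(4) by (intro mult_right_mono)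
  finally show "c / 2 * \<rho> x y \<le> Q x y + R x y" using principal[of x y] by linarith
qed

lemma hpart_2: "hpart a 2 u w = a 2 0 * u^2 + a 1 1 * u * w + a 0 2 * w^2"
  by (simp add: hpart_def eval_nat_numeral atMost_Suc algebra_simps)

lemma bipoly_ge_sq:
  assumes nonneg: "\<And>x y. 0 \<le> bipoly a x y" and "ord_ge a 2" and "inp a = {}"
  shows "\<exists>\<delta>>0. \<exists>c>0. \<forall>x y. \<bar>x\<bar> \<le> \<delta> \<longrightarrow> \<bar>y\<bar> \<le> \<delta> \<longrightarrow> c * (x^2 + y^2) \<le> bipoly a x y"
proof -
  have nz: "a 2 0 * u^2 + a 1 1 * u * w + a 0 2 * w^2 \<noteq> 0" if "(u, w) \<noteq> (0, 0)" for u w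
    using \<open>inp a = {}\<close> that by (auto simp: inp_def hpart_2)
  let ?r = "coeffs_on (-{(2,0),(1,1),(0,2)}) a"
  have r: "ord_ge ?r 3" using assms(2) by (simp add: ord_ge_3_iff ord_ge_2_iff coeffs_on_def)
  have "0 \<le> a 2 0"
  proof (rule lowest_coeff_nonneg[of 1 "a 2 0" 2 "\<lambda>t. bipoly ?r t 0" "coeff_norm ?r"])
    fix t :: real assume t: "0 < t" "t \<le> 1"
    show "0 \<le> a 2 0 * t ^ 2 + bipoly ?r t 0" using nonneg[of t 0] bipoly_split_quadratic[of a t 0] by simp
    have "\<bar>bipoly ?r t 0\<bar> \<le> coeff_norm ?r * (t * (t^2 + 0^2))"
      using bipoly_abs_le_sq_small[OF r, of t t 0] t by simp
    then show "\<bar>bipoly ?r t 0\<bar> \<le> coeff_norm ?r * t ^ (2 + 1)" by (simp add: power2_eq_square power3_eq_cube)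
  qed simp
  moreover have "a 2 0 \<noteq> 0" using nz[of 1 0] by simp
  ultimately have a20: "0 < a 2 0" by simp
  have "(a 1 1)^2 < 4 * a 2 0 * a 0 2"
  proof (rule ccontr)
    assume "\<not> ?thesis"
    then obtain u where "a 2 0 * u^2 + a 1 1 * u + a 0 2 = 0"
      using discriminant_nonneg_ex[of "a 2 0" "a 1 1" "a 0 2"] a20 by (auto simp: discrim_def)
    then show False using nz[of u 1] by simp
  qed
  then obtain c where c: "0 < c" "\<And>x y. c * (x^2 + y^2) \<le> a 2 0 * x^2 + a 1 1 * x * y + a 0 2 * y^2"
    using quadratic_form_ge[OF a20] by blast
  then have "\<exists>\<delta>>0. \<exists>c'>0. \<forall>x y. \<bar>x\<bar> \<le> \<delta> \<longrightarrow> \<bar>y\<bar> \<le> \<delta> \<longrightarrow>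
      c' * (x^2 + y^2) \<le> (a 2 0 * x^2 + a 1 1 * x * y + a 0 2 * y^2) + bipoly ?r x y"
    using bipoly_abs_le_sq_small[OF r] by (intro lower_bound_near_0[OF c(1) coeff_norm_nonneg c(2)]) auto
  then show ?thesis unfolding bipoly_split_quadratic[of a] .
qed

text \<open>On the parabola \<open>y = v x^2\<close> the lowest term is \<open>(a 4 0 + a 2 1 v + a 0 2 v^2) x^4\<close>.\<close>

lemma bipoly_nonneg_weighted_principal_nonneg:
  assumes nonneg: "\<And>x y. 0 \<le> bipoly a x y" and "weighted_ord_ge a 4"
  shows "0 \<le> a 4 0 + a 2 1 * v + a 0 2 * v^2"
proof -
  let ?r = "coeffs_on (-{(4,0),(2,1),(0,2)}) a"
  have r: "weighted_ord_ge ?r 5"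
    using assms(2) by (simp add: weighted_ord_ge_5_iff weighted_ord_ge_4_iff ord_ge_2_iff coeffs_on_def)
  show ?thesis
  proof (rule lowest_coeff_nonneg[of "1 / (1 + \<bar>v\<bar>)" _ 4 "\<lambda>t. bipoly ?r t (v * t^2)"
        "coeff_norm ?r * (1 + \<bar>v\<bar>) * (1 + v^2)"])
    show "0 < 1 / (1 + \<bar>v\<bar>)" by (simp add: add_pos_nonneg)
  next
    fix t :: real assume t: "0 < t" "t \<le> 1 / (1 + \<bar>v\<bar>)"
    show "0 \<le> (a 4 0 + a 2 1 * v + a 0 2 * v^2) * t ^ 4 + bipoly ?r t (v * t^2)"
      using nonneg[of t "v * t^2"] bipoly_split_weighted_quadratic[of a t "v * t^2"]
      by (simp add: algebra_simps eval_nat_numeral)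
    define e where "e = t * (1 + \<bar>v\<bar>)"
    have e1: "e \<le> 1" and te: "t \<le> e" using t by (simp_all add: e_def field_simps)
    then have "\<bar>v\<bar> * t * t \<le> \<bar>v\<bar> * t * 1" using t by (intro mult_left_mono) auto
    also have "\<dots> \<le> e" using t by (simp add: e_def algebra_simps)
    finally have ye: "\<bar>v * t^2\<bar> \<le> e" using t by (simp add: abs_mult power2_eq_square mult.assoc)
    have "\<bar>bipoly ?r t (v * t^2)\<bar> \<le> coeff_norm ?r * (e * (t^4 + (v * t^2)^2))"
      using bipoly_abs_le_weighted_small[OF r _ ye e1] te t by simp
    also have "\<dots> = coeff_norm ?r * (1 + \<bar>v\<bar>) * (1 + v^2) * t ^ (4 + 1)"
      by (simp add: e_def power2_eq_square eval_nat_numeral algebra_simps)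
    finally show "\<bar>bipoly ?r t (v * t^2)\<bar> \<le> coeff_norm ?r * (1 + \<bar>v\<bar>) * (1 + v^2) * t ^ (4 + 1)" .
  qed
qed

lemma bipoly_ge_weighted:
  assumes nonneg: "\<And>x y. 0 \<le> bipoly a x y" and "weighted_ord_ge a 4"
    and "(a 2 1)^2 \<noteq> 4 * a 0 2 * a 4 0"
  shows "\<exists>\<delta>>0. \<exists>c>0. \<forall>x y. \<bar>x\<bar> \<le> \<delta> \<longrightarrow> \<bar>y\<bar> \<le> \<delta> \<longrightarrow> c * (x^4 + y^2) \<le> bipoly a x y"
proof -
  note q = bipoly_nonneg_weighted_principal_nonneg[OF assms(1,2)]
  have disc: "(a 2 1)^2 < 4 * a 4 0 * a 0 2"
    using discrim_le_if_nonneg[of "a 4 0" "a 2 1" "a 0 2"] q assms(3) by (simp add: algebra_simps)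
  have "0 \<le> a 4 0" using q[of 0] by simp
  moreover have "a 4 0 \<noteq> 0" using disc by (auto simp: zero_le_power2)
  ultimately have "0 < a 4 0" by simp
  from quadratic_form_ge[OF this disc] obtain c where c: "0 < c"
    "\<And>U V. c * (U^2 + V^2) \<le> a 4 0 * U^2 + a 2 1 * U * V + a 0 2 * V^2"
    by blast
  have "c * (x^4 + y^2) \<le> a 4 0 * x^4 + a 2 1 * x^2 * y + a 0 2 * y^2" for x y
    using c(2)[of "x^2" y] by (simp add: power_mult[symmetric])
  moreover have "weighted_ord_ge (coeffs_on (-{(4,0),(2,1),(0,2)}) a) 5"
    using assms(2) by (simp add: weighted_ord_ge_5_iff weighted_ord_ge_4_iff ord_ge_2_iff coeffs_on_def)
  ultimately have "\<exists>\<delta>>0. \<exists>c'>0. \<forall>x y. \<bar>x\<bar> \<le> \<delta> \<longrightarrow> \<bar>y\<bar> \<le> \<delta> \<longrightarrow>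
      c' * (x^4 + y^2) \<le> (a 4 0 * x^4 + a 2 1 * x^2 * y + a 0 2 * y^2) +
        bipoly (coeffs_on (-{(4,0),(2,1),(0,2)}) a) x y"
    using bipoly_abs_le_weighted_small
    by (intro lower_bound_near_0[OF c(1) coeff_norm_nonneg]) (auto simp: add_nonneg_nonneg)
  then show ?thesis unfolding bipoly_split_weighted_quadratic[of a] .
qed

section \<open>Growth conditions in a chart\<close>

definition chart_bounded :: "(real^3 \<Rightarrow> real) \<Rightarrow> real^3^3 \<Rightarrow> (real \<Rightarrow> real \<Rightarrow> real) \<Rightarrow> bool" where
  "chart_bounded g B \<rho> \<longleftrightarrow>
     (\<exists>\<delta>>0. \<exists>K. \<forall>x y. \<bar>x\<bar> \<le> \<delta> \<longrightarrow> \<bar>y\<bar> \<le> \<delta> \<longrightarrow> \<bar>g (B *v vector [x, y, 1])\<bar> \<le> K * \<rho> x y)"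

lemma chart_bounded_iff_bipoly:
  "local_coeffs g B a \<Longrightarrow> chart_bounded g B \<rho> \<longleftrightarrow>
     (\<exists>\<delta>>0. \<exists>K. \<forall>x y. \<bar>x\<bar> \<le> \<delta> \<longrightarrow> \<bar>y\<bar> \<le> \<delta> \<longrightarrow> \<bar>bipoly a x y\<bar> \<le> K * \<rho> x y)"
  using local_coeffs_bipoly[of g B a] by (simp add: chart_bounded_def)

lemma subspace_chart_bounded: "module.subspace fscale {g. chart_bounded g B \<rho>}"
proof -
  have "chart_bounded 0 B \<rho>"
    unfolding chart_bounded_def by (intro exI[of _ "1::real"] conjI exI[of _ "0::real"]) auto
  moreover have "chart_bounded (g + h) B \<rho>" if gh: "chart_bounded g B \<rho>" "chart_bounded h B \<rho>" for g h
  proof -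
    obtain \<delta>1 K1 \<delta>2 K2 where "0 < \<delta>1" "0 < \<delta>2"
      and "\<And>x y. \<bar>x\<bar> \<le> \<delta>1 \<Longrightarrow> \<bar>y\<bar> \<le> \<delta>1 \<Longrightarrow> \<bar>g (B *v vector [x, y, 1])\<bar> \<le> K1 * \<rho> x y"
      and "\<And>x y. \<bar>x\<bar> \<le> \<delta>2 \<Longrightarrow> \<bar>y\<bar> \<le> \<delta>2 \<Longrightarrow> \<bar>h (B *v vector [x, y, 1])\<bar> \<le> K2 * \<rho> x y"
      using gh unfolding chart_bounded_def by metis
    then show ?thesis unfolding chart_bounded_def
      by (intro exI[of _ "min \<delta>1 \<delta>2"] conjI exI[of _ "K1 + K2"])
        (auto simp: algebra_simps intro!: abs_triangle_ineq[THEN order_trans] add_mono)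
  qed
  moreover have "chart_bounded (fscale c g) B \<rho>" if g: "chart_bounded g B \<rho>" for c g
  proof -
    obtain \<delta> K where "0 < \<delta>"
      and b: "\<And>x y. \<bar>x\<bar> \<le> \<delta> \<Longrightarrow> \<bar>y\<bar> \<le> \<delta> \<Longrightarrow> \<bar>g (B *v vector [x, y, 1])\<bar> \<le> K * \<rho> x y"
      using g unfolding chart_bounded_def by metis
    moreover have "\<bar>fscale c g (B *v vector [x, y, 1])\<bar> \<le> (\<bar>c\<bar> * K) * \<rho> x y"
      if "\<bar>x\<bar> \<le> \<delta>" "\<bar>y\<bar> \<le> \<delta>" for x y
      using mult_left_mono[OF b[OF that], of "\<bar>c\<bar>"] by (simp add: fscale_def abs_mult mult.assoc)
    ultimately show ?thesis unfolding chart_bounded_def by blast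
  qed
  ultimately show ?thesis unfolding module.subspace_def[OF module_fscale] by blast
qed

abbreviation e1 :: "real^3" where "e1 \<equiv> vector [1, 0, 0]"
abbreviation e2 :: "real^3" where "e2 \<equiv> vector [0, 1, 0]"
abbreviation e3 :: "real^3" where "e3 \<equiv> vector [0, 0, 1]"

lemma matrix_inv_vec:
  assumes "invertible (C::real^3^3)"
  shows "C *v (matrix_inv C *v w) = w" "matrix_inv C *v (C *v w) = w"
proof -
  have "C ** matrix_inv C = mat 1 \<and> matrix_inv C ** C = mat 1"
    using assms unfolding invertible_def matrix_inv_def by (rule someI_ex)
  then show "C *v (matrix_inv C *v w) = w" "matrix_inv C *v (C *v w) = w"
    by (simp_all add: matrix_vector_mul_assoc)
qed

lemma coords_at_same_center:
  assumes "coords_at p B" "coords_at p B'"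
  obtains k where "k \<noteq> 0" "B' *v e3 = k *\<^sub>R (B *v e3)"
proof -
  obtain c c' where "c \<noteq> 0" "B *v e3 = c *\<^sub>R p" "c' \<noteq> 0" "B' *v e3 = c' *\<^sub>R p"
    using assms unfolding coords_at_def same_pt_def by blast
  then show ?thesis using that[of "c' / c"] by simp
qed

text \<open>Passing from the chart \<open>B\<close> to the chart \<open>B'\<close> with the same center is a projective
  transformation of the affine plane, with columns \<open>m1, m2, k e3\<close>.\<close>

lemma H4_chart_change:
  fixes B B' Bi :: "real^3^3"
  assumes g: "g \<in> H4" and Bi: "\<And>w. B *v (Bi *v w) = w" and k: "B' *v e3 = k *\<^sub>R (B *v e3)"
    and m: "m1 = Bi *v (B' *v e1)" "m2 = Bi *v (B' *v e2)"
    and D: "m1$3 * x + m2$3 * y + k \<noteq> 0"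
  shows "g (B' *v vector [x, y, 1]) = (m1$3 * x + m2$3 * y + k)^4 *
    g (B *v vector [(m1$1 * x + m2$1 * y) / (m1$3 * x + m2$3 * y + k),
                    (m1$2 * x + m2$2 * y) / (m1$3 * x + m2$3 * y + k), 1])"
proof -
  define X where "X = x *\<^sub>R m1 + y *\<^sub>R m2 + k *\<^sub>R e3"
  have "vector [x, y, 1] = x *\<^sub>R e1 + y *\<^sub>R e2 + (e3 :: real^3)"
    by (simp add: vec_eq_iff forall_3 vector_3)
  then have "B' *v vector [x, y, 1] = x *\<^sub>R (B' *v e1) + y *\<^sub>R (B' *v e2) + B' *v e3"
    by (simp add: matrix_vector_right_distrib matrix_vector_mult_scaleR)
  also have "\<dots> = B *v X"
    by (simp add: X_def m k Bi matrix_vector_right_distrib matrix_vector_mult_scaleR)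
  finally have "B' *v vector [x, y, 1] = B *v X" .
  moreover have "X$1 = m1$1 * x + m2$1 * y" "X$2 = m1$2 * x + m2$2 * y"
    "X$3 = m1$3 * x + m2$3 * y + k"
    by (simp_all add: X_def vector_3 algebra_simps)
  ultimately show ?thesis using H4_dehomogenize[OF g, of X B] D by simp
qed

lemma denominator_near_constant:
  fixes a b k :: real
  assumes "k \<noteq> 0"
  obtains \<eta> where "0 < \<eta>"
    "\<And>x y. \<bar>x\<bar> \<le> \<eta> \<Longrightarrow> \<bar>y\<bar> \<le> \<eta> \<Longrightarrow> \<bar>k\<bar> / 2 \<le> \<bar>a * x + b * y + k\<bar> \<and> \<bar>a * x + b * y + k\<bar> \<le> 2 * \<bar>k\<bar>"
proof
  define \<eta> where "\<eta> = \<bar>k\<bar> / (2 * (\<bar>a\<bar> + \<bar>b\<bar> + 1))"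
  show "0 < \<eta>" using assms by (simp add: \<eta>_def add_pos_nonneg)
  fix x y assume "\<bar>x\<bar> \<le> \<eta>" "\<bar>y\<bar> \<le> \<eta>"
  then have "\<bar>a\<bar> * \<bar>x\<bar> + \<bar>b\<bar> * \<bar>y\<bar> \<le> \<bar>a\<bar> * \<eta> + \<bar>b\<bar> * \<eta>" by (intro add_mono mult_left_mono) auto
  then have "\<bar>a * x + b * y\<bar> \<le> (\<bar>a\<bar> + \<bar>b\<bar>) * \<eta>"
    using abs_triangle_ineq[of "a * x" "b * y"] by (simp add: abs_mult algebra_simps)
  also have "\<dots> \<le> \<bar>k\<bar> / 2" by (simp add: \<eta>_def field_simps)
  finally show "\<bar>k\<bar> / 2 \<le> \<bar>a * x + b * y + k\<bar> \<and> \<bar>a * x + b * y + k\<bar> \<le> 2 * \<bar>k\<bar>" by linarith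
qed

lemma abs_linear_div_le:
  fixes k D :: real
  assumes "k \<noteq> 0" "\<bar>k\<bar> / 2 \<le> \<bar>D\<bar>"
  shows "\<bar>(p * x + q * y) / D\<bar> \<le> 2 / \<bar>k\<bar> * (\<bar>p\<bar> * \<bar>x\<bar> + \<bar>q\<bar> * \<bar>y\<bar>)"
proof -
  have "\<bar>(p * x + q * y) / D\<bar> \<le> \<bar>p * x + q * y\<bar> / (\<bar>k\<bar> / 2)"
    unfolding abs_divide using assms by (intro divide_left_mono) auto
  also have "\<dots> = 2 / \<bar>k\<bar> * \<bar>p * x + q * y\<bar>" by simp
  also have "\<dots> \<le> 2 / \<bar>k\<bar> * (\<bar>p\<bar> * \<bar>x\<bar> + \<bar>q\<bar> * \<bar>y\<bar>)"
    using abs_triangle_ineq[of "p * x" "q * y"] by (intro mult_left_mono) (auto simp: abs_mult)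
  finally show ?thesis .
qed

lemma linear_form_le_radius:
  fixes k :: real
  assumes "k \<noteq> 0" "0 < P" "\<bar>p\<bar> + \<bar>q\<bar> \<le> P"
    and "\<bar>x\<bar> \<le> \<delta> * \<bar>k\<bar> / (2 * P)" "\<bar>y\<bar> \<le> \<delta> * \<bar>k\<bar> / (2 * P)"
  shows "2 / \<bar>k\<bar> * (\<bar>p\<bar> * \<bar>x\<bar> + \<bar>q\<bar> * \<bar>y\<bar>) \<le> \<delta>"
proof -
  let ?r = "\<delta> * \<bar>k\<bar> / (2 * P)"
  have "0 \<le> ?r" using assms(4) by linarith
  have "\<bar>p\<bar> * \<bar>x\<bar> + \<bar>q\<bar> * \<bar>y\<bar> \<le> \<bar>p\<bar> * ?r + \<bar>q\<bar> * ?r"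
    using assms(4,5) by (intro add_mono mult_left_mono) auto
  also have "\<dots> = (\<bar>p\<bar> + \<bar>q\<bar>) * ?r" by (simp only: distrib_right)
  also have "\<dots> \<le> P * ?r" using assms(3) \<open>0 \<le> ?r\<close> by (rule mult_right_mono)
  finally show ?thesis using assms(1,2) by (simp add: field_simps)
qed

text \<open>The weight \<open>\<rho>\<close> only has to be controlled under the linear bounds that
  \<open>abs_linear_div_le\<close> gives for the new affine coordinates.\<close>

lemma bound_under_chart_change:
  fixes G G' \<rho> :: "real \<Rightarrow> real \<Rightarrow> real"
  assumes "k \<noteq> 0" "0 < \<delta>"
    and rel: "\<And>x y. p3 * x + q3 * y + k \<noteq> 0 \<Longrightarrow> G' x y = (p3 * x + q3 * y + k)^4 *
      G ((p1 * x + q1 * y) / (p3 * x + q3 * y + k)) ((p2 * x + q2 * y) / (p3 * x + q3 * y + k))"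
    and bound: "\<And>x y. \<bar>x\<bar> \<le> \<delta> \<Longrightarrow> \<bar>y\<bar> \<le> \<delta> \<Longrightarrow> \<bar>G x y\<bar> \<le> K * \<rho> x y"
    and \<rho>_nonneg: "\<And>x y. 0 \<le> \<rho> x y"
    and \<rho>_change: "\<And>x y u w. \<bar>x\<bar> \<le> 1 \<Longrightarrow> \<bar>y\<bar> \<le> 1 \<Longrightarrow>
      \<bar>u\<bar> \<le> 2 / \<bar>k\<bar> * (\<bar>p1\<bar> * \<bar>x\<bar> + \<bar>q1\<bar> * \<bar>y\<bar>) \<Longrightarrow> \<bar>w\<bar> \<le> 2 / \<bar>k\<bar> * (\<bar>p2\<bar> * \<bar>x\<bar> + \<bar>q2\<bar> * \<bar>y\<bar>) \<Longrightarrow>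
      \<rho> u w \<le> L * \<rho> x y"
  shows "\<exists>\<delta>'>0. \<exists>K'. \<forall>x y. \<bar>x\<bar> \<le> \<delta>' \<longrightarrow> \<bar>y\<bar> \<le> \<delta>' \<longrightarrow> \<bar>G' x y\<bar> \<le> K' * \<rho> x y"
proof -
  obtain \<eta>0 where "0 < \<eta>0" and den: "\<And>x y. \<bar>x\<bar> \<le> \<eta>0 \<Longrightarrow> \<bar>y\<bar> \<le> \<eta>0 \<Longrightarrow>
      \<bar>k\<bar> / 2 \<le> \<bar>p3 * x + q3 * y + k\<bar> \<and> \<bar>p3 * x + q3 * y + k\<bar> \<le> 2 * \<bar>k\<bar>"
    using denominator_near_constant[OF assms(1)] by blast
  define P where "P = \<bar>p1\<bar> + \<bar>q1\<bar> + \<bar>p2\<bar> + \<bar>q2\<bar> + 1"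
  define \<eta> where "\<eta> = min (min \<eta>0 1) (\<delta> * \<bar>k\<bar> / (2 * P))"
  have "0 < P" by (simp add: P_def add_pos_nonneg)
  have \<eta>: "0 < \<eta>" "\<eta> \<le> \<eta>0" "\<eta> \<le> 1"
    using \<open>0 < \<eta>0\<close> assms(1,2) \<open>0 < P\<close> by (auto simp: \<eta>_def)
  have "\<bar>G' x y\<bar> \<le> ((2 * \<bar>k\<bar>)^4 * \<bar>K\<bar> * L) * \<rho> x y" if xy: "\<bar>x\<bar> \<le> \<eta>" "\<bar>y\<bar> \<le> \<eta>" for x y
  proof -
    define D where "D = p3 * x + q3 * y + k"
    define u where "u = (p1 * x + q1 * y) / D"
    define w where "w = (p2 * x + q2 * y) / D"
    have D: "\<bar>k\<bar> / 2 \<le> \<bar>D\<bar>" "\<bar>D\<bar> \<le> 2 * \<bar>k\<bar>" using den[of x y] xy \<eta> by (auto simp: D_def)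
    then have "D \<noteq> 0" using assms(1) by auto
    have u: "\<bar>u\<bar> \<le> 2 / \<bar>k\<bar> * (\<bar>p1\<bar> * \<bar>x\<bar> + \<bar>q1\<bar> * \<bar>y\<bar>)"
      and w: "\<bar>w\<bar> \<le> 2 / \<bar>k\<bar> * (\<bar>p2\<bar> * \<bar>x\<bar> + \<bar>q2\<bar> * \<bar>y\<bar>)"
      unfolding u_def w_def using abs_linear_div_le[OF assms(1) D(1)] by blast+
    have r: "\<bar>x\<bar> \<le> \<delta> * \<bar>k\<bar> / (2 * P)" "\<bar>y\<bar> \<le> \<delta> * \<bar>k\<bar> / (2 * P)" using xy by (simp_all add: \<eta>_def)
    have "\<bar>p1\<bar> + \<bar>q1\<bar> \<le> P" "\<bar>p2\<bar> + \<bar>q2\<bar> \<le> P" by (simp_all add: P_def)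
    then have "\<bar>u\<bar> \<le> \<delta>" "\<bar>w\<bar> \<le> \<delta>"
      using u w linear_form_le_radius[OF assms(1) \<open>0 < P\<close> _ r] by (meson order_trans)+
    then have "\<bar>G u w\<bar> \<le> \<bar>K\<bar> * \<rho> u w"
      using bound[of u w] mult_right_mono[OF abs_ge_self \<rho>_nonneg[of u w], of K] by linarith
    also have "\<dots> \<le> \<bar>K\<bar> * (L * \<rho> x y)"
      using \<rho>_change[OF _ _ u w] xy \<eta>(3) by (intro mult_left_mono) auto
    finally have G: "\<bar>G u w\<bar> \<le> \<bar>K\<bar> * L * \<rho> x y" by simp
    have D4: "\<bar>D\<bar>^4 \<le> (2 * \<bar>k\<bar>)^4" using D by (intro power_mono) auto
    have "\<bar>G' x y\<bar> = \<bar>D\<bar>^4 * \<bar>G u w\<bar>"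
      using rel[of x y] \<open>D \<noteq> 0\<close> by (simp add: D_def u_def w_def abs_mult power_abs)
    also have "\<dots> \<le> (2 * \<bar>k\<bar>)^4 * (\<bar>K\<bar> * L * \<rho> x y)"
      by (rule mult_mono[OF D4 G]) simp_all
    finally show ?thesis by (simp only: mult.assoc)
  qed
  then show ?thesis using \<eta>(1) by blast
qed

lemma sq_le_of_abs_le_linear:
  fixes u x y a b :: real
  assumes "\<bar>u\<bar> \<le> a * \<bar>x\<bar> + b * \<bar>y\<bar>"
  shows "u^2 \<le> 2 * (a^2 * x^2 + b^2 * y^2)"
proof -
  have "u^2 \<le> (a * \<bar>x\<bar> + b * \<bar>y\<bar>)^2"
    using assms by (metis abs_ge_zero order_trans power2_abs power_mono)
  also have "\<dots> \<le> 2 * (a^2 * x^2 + b^2 * y^2)"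
    using zero_le_power2[of "a * \<bar>x\<bar> - b * \<bar>y\<bar>"] by (simp add: power2_eq_square algebra_simps)
  finally show ?thesis .
qed

lemma sum_le_sum_mult_sum:
  fixes P Q s t :: real
  assumes "0 \<le> P" "0 \<le> Q" "0 \<le> s" "0 \<le> t"
  shows "P * s + Q * t \<le> (P + Q) * (s + t)"
  using assms by (simp add: algebra_simps)

lemma chart_bounded_sq_change:
  assumes g: "g \<in> H4" and B: "coords_at p B" and B': "coords_at p B'"
    and bounded: "chart_bounded g B (\<lambda>x y. x^2 + y^2)"
  shows "chart_bounded g B' (\<lambda>x y. x^2 + y^2)"
proof -
  obtain k where k: "k \<noteq> 0" "B' *v e3 = k *\<^sub>R (B *v e3)" using coords_at_same_center[OF B B'] .
  define Bi where "Bi = matrix_inv B"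
  have Bi: "\<And>w. B *v (Bi *v w) = w" using B matrix_inv_vec(1) unfolding coords_at_def Bi_def by blast
  define m1 where "m1 = Bi *v (B' *v e1)"
  define m2 where "m2 = Bi *v (B' *v e2)"
  obtain \<delta> K where "0 < \<delta>"
    and bound: "\<And>x y. \<bar>x\<bar> \<le> \<delta> \<Longrightarrow> \<bar>y\<bar> \<le> \<delta> \<Longrightarrow> \<bar>g (B *v vector [x, y, 1])\<bar> \<le> K * (x^2 + y^2)"
    using bounded unfolding chart_bounded_def by blast
  let ?C = "2 / \<bar>k\<bar>"
  define a1 b1 a2 b2 where "a1 = ?C * \<bar>m1$1\<bar>" "b1 = ?C * \<bar>m2$1\<bar>" "a2 = ?C * \<bar>m1$2\<bar>" "b2 = ?C * \<bar>m2$2\<bar>"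
  have change: "u^2 + w^2 \<le> (2 * (a1^2 + a2^2) + 2 * (b1^2 + b2^2)) * (x^2 + y^2)"
    if "\<bar>u\<bar> \<le> ?C * (\<bar>m1$1\<bar> * \<bar>x\<bar> + \<bar>m2$1\<bar> * \<bar>y\<bar>)" "\<bar>w\<bar> \<le> ?C * (\<bar>m1$2\<bar> * \<bar>x\<bar> + \<bar>m2$2\<bar> * \<bar>y\<bar>)"
    for x y u w :: real
  proof -
    have "\<bar>u\<bar> \<le> a1 * \<bar>x\<bar> + b1 * \<bar>y\<bar>" "\<bar>w\<bar> \<le> a2 * \<bar>x\<bar> + b2 * \<bar>y\<bar>"
      using that unfolding a1_b1_a2_b2_def by (simp_all only: distrib_left mult.assoc)
    from this[THEN sq_le_of_abs_le_linear]
    have "u^2 + w^2 \<le> (2 * (a1^2 + a2^2)) * x^2 + (2 * (b1^2 + b2^2)) * y^2"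
      by (simp add: algebra_simps)
    also have "\<dots> \<le> (2 * (a1^2 + a2^2) + 2 * (b1^2 + b2^2)) * (x^2 + y^2)"
      by (intro sum_le_sum_mult_sum) auto
    finally show ?thesis .
  qed
  show ?thesis unfolding chart_bounded_def
    by (rule bound_under_chart_change[where G="\<lambda>x y. g (B *v vector [x, y, 1])"
      and G'="\<lambda>x y. g (B' *v vector [x, y, 1])",
      OF k(1) \<open>0 < \<delta>\<close> H4_chart_change[OF g Bi k(2) m1_def m2_def] bound _ change]) auto
qed

lemma fourth_power_le_of_abs_le_linear:
  fixes u x y a b :: real
  assumes "\<bar>u\<bar> \<le> a * \<bar>x\<bar> + b * \<bar>y\<bar>" "\<bar>y\<bar> \<le> 1"
  shows "u^4 \<le> 8 * a^4 * x^4 + 8 * b^4 * y^2"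
proof -
  have square_sum: "(2 * (s + t))^2 \<le> 8 * (s^2 + t^2)" for s t :: real
    using zero_le_power2[of "s - t"] by (simp add: power2_eq_square algebra_simps)
  have "u^4 = (u^2)^2" by simp
  also have "\<dots> \<le> (2 * (a^2 * x^2 + b^2 * y^2))^2"
    using sq_le_of_abs_le_linear[OF assms(1)] by (intro power_mono) auto
  also have "\<dots> \<le> 8 * ((a^2 * x^2)^2 + (b^2 * y^2)^2)" by (rule square_sum)
  also have "\<dots> = 8 * a^4 * x^4 + 8 * b^4 * y^4" by (simp add: power_mult_distrib algebra_simps)
  also have "\<dots> \<le> 8 * a^4 * x^4 + 8 * b^4 * y^2"
    using power_decreasing[of 2 4 "\<bar>y\<bar>"] assms(2) by (simp add: power_abs mult_left_mono)
  finally show ?thesis .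
qed

lemma chart_bounded_weighted_change:
  assumes g: "g \<in> H4" and B: "coords_at_line p l B" and B': "coords_at_line p l B'"
    and bounded: "chart_bounded g B (\<lambda>x y. x^4 + y^2)"
  shows "chart_bounded g B' (\<lambda>x y. x^4 + y^2)"
proof -
  obtain k where k: "k \<noteq> 0" "B' *v e3 = k *\<^sub>R (B *v e3)"
    using coords_at_same_center B B' unfolding coords_at_line_def by metis
  define Bi where "Bi = matrix_inv B"
  have Bi: "\<And>w. B *v (Bi *v w) = w"
    using B matrix_inv_vec(1) unfolding coords_at_line_def coords_at_def Bi_def by blast
  define m1 where "m1 = Bi *v (B' *v e1)"
  define m2 where "m2 = Bi *v (B' *v e2)"
  \<comment> \<open>both charts map the axis \<open>y = 0\<close> onto the line \<open>l\<close>\<close>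
  have "l \<bullet> (B' *v e1) = 0" using B' unfolding coords_at_line_def by (simp add: vector_3)
  then have "m1$2 = 0" using B Bi unfolding coords_at_line_def m1_def by metis
  obtain \<delta> K where "0 < \<delta>"
    and bound: "\<And>x y. \<bar>x\<bar> \<le> \<delta> \<Longrightarrow> \<bar>y\<bar> \<le> \<delta> \<Longrightarrow> \<bar>g (B *v vector [x, y, 1])\<bar> \<le> K * (x^4 + y^2)"
    using bounded unfolding chart_bounded_def by blast
  let ?C = "2 / \<bar>k\<bar>"
  define a1 b1 b2 where "a1 = ?C * \<bar>m1$1\<bar>" "b1 = ?C * \<bar>m2$1\<bar>" "b2 = ?C * \<bar>m2$2\<bar>"
  have change: "u^4 + w^2 \<le> (8 * a1^4 + (8 * b1^4 + 2 * b2^2)) * (x^4 + y^2)"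
    if "\<bar>y\<bar> \<le> 1" "\<bar>u\<bar> \<le> ?C * (\<bar>m1$1\<bar> * \<bar>x\<bar> + \<bar>m2$1\<bar> * \<bar>y\<bar>)" "\<bar>w\<bar> \<le> ?C * (\<bar>m1$2\<bar> * \<bar>x\<bar> + \<bar>m2$2\<bar> * \<bar>y\<bar>)"
    for x y u w :: real
  proof -
    have "\<bar>u\<bar> \<le> a1 * \<bar>x\<bar> + b1 * \<bar>y\<bar>" "\<bar>w\<bar> \<le> 0 * \<bar>x\<bar> + b2 * \<bar>y\<bar>"
      using that \<open>m1$2 = 0\<close> unfolding a1_b1_b2_def by (simp_all only: distrib_left mult.assoc) simp
    from fourth_power_le_of_abs_le_linear[OF this(1) that(1)] sq_le_of_abs_le_linear[OF this(2)]
    have "u^4 + w^2 \<le> (8 * a1^4) * x^4 + (8 * b1^4 + 2 * b2^2) * y^2"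
      by (simp add: algebra_simps)
    also have "\<dots> \<le> (8 * a1^4 + (8 * b1^4 + 2 * b2^2)) * (x^4 + y^2)"
      by (intro sum_le_sum_mult_sum) auto
    finally show ?thesis .
  qed
  show ?thesis unfolding chart_bounded_def
    by (rule bound_under_chart_change[where G="\<lambda>x y. g (B *v vector [x, y, 1])"
      and G'="\<lambda>x y. g (B' *v vector [x, y, 1])",
      OF k(1) \<open>0 < \<delta>\<close> H4_chart_change[OF g Bi k(2) m1_def m2_def] bound _ change]) auto
qed

section \<open>The spaces attached to a configuration\<close>

lemma local_coeffs_center:
  assumes "g \<in> H4" "coords_at p B" "local_coeffs g B a"
  shows "a 0 0 = 0 \<longleftrightarrow> g p = 0"
proof -
  have "g (B *v e3) = a 0 0" using local_coeffs_bipoly[OF assms(3), of 0 0] by (simp add: bipoly_0_0)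
  then show ?thesis
    using H4_vanishes_at_same_pt[OF assms(1)] assms(2) unfolding coords_at_def by metis
qed

lemma I_pt_iff_chart_bounded:
  assumes B: "coords_at s B"
  shows "g \<in> I_pt s \<longleftrightarrow> g \<in> H4 \<and> chart_bounded g B (\<lambda>x y. x^2 + y^2)"
proof
  assume "g \<in> I_pt s"
  then obtain B' a where g: "g \<in> H4" and B': "coords_at s B'" and a: "local_coeffs g B' a" "ord_ge a 2"
    unfolding I_pt_def by blast
  have "chart_bounded g B' (\<lambda>x y. x^2 + y^2)"
    unfolding chart_bounded_iff_bipoly[OF a(1)] using bipoly_abs_le_sq[OF a(2)] by (intro exI[of _ 1]) auto
  then show "g \<in> H4 \<and> chart_bounded g B (\<lambda>x y. x^2 + y^2)"
    using chart_bounded_sq_change[OF g B' B] g by blast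
next
  assume "g \<in> H4 \<and> chart_bounded g B (\<lambda>x y. x^2 + y^2)"
  moreover obtain a where a: "local_coeffs g B a" using local_coeffs_exist calculation by blast
  ultimately obtain \<delta> K where "0 < \<delta>"
    "\<And>x y. \<bar>x\<bar> \<le> \<delta> \<Longrightarrow> \<bar>y\<bar> \<le> \<delta> \<Longrightarrow> \<bar>bipoly a x y\<bar> \<le> K * (x^2 + y^2)"
    unfolding chart_bounded_iff_bipoly[OF a] by blast
  then have "ord_ge a 2" by (rule ord_ge_2_if_bipoly_bounded)
  then show "g \<in> I_pt s" unfolding I_pt_def using B a \<open>g \<in> H4 \<and> _\<close> by blast
qed

lemma I_pl_iff_chart_bounded:
  assumes B: "coords_at_line p l B"
  shows "g \<in> I_pl p l \<longleftrightarrow> g \<in> H4 \<and> chart_bounded g B (\<lambda>x y. x^4 + y^2)"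
proof
  assume "g \<in> I_pl p l"
  then obtain B' a where g: "g \<in> H4" and B': "coords_at_line p l B'" and a: "local_coeffs g B' a"
    "weighted_ord_ge a 4"
    unfolding I_pl_def weighted_ord_ge_4_iff ord_ge_2_iff by blast
  have "chart_bounded g B' (\<lambda>x y. x^4 + y^2)"
    unfolding chart_bounded_iff_bipoly[OF a(1)] using bipoly_abs_le_weighted[OF a(2)] by (intro exI[of _ 1]) auto
  then show "g \<in> H4 \<and> chart_bounded g B (\<lambda>x y. x^4 + y^2)"
    using chart_bounded_weighted_change[OF g B' B] g by blast
next
  assume "g \<in> H4 \<and> chart_bounded g B (\<lambda>x y. x^4 + y^2)"
  moreover obtain a where a: "local_coeffs g B a" using local_coeffs_exist calculation by blast
  ultimately obtain \<delta> K where "0 < \<delta>"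
    "\<And>x y. \<bar>x\<bar> \<le> \<delta> \<Longrightarrow> \<bar>y\<bar> \<le> \<delta> \<Longrightarrow> \<bar>bipoly a x y\<bar> \<le> K * (x^4 + y^2)"
    unfolding chart_bounded_iff_bipoly[OF a] by blast
  then have "weighted_ord_ge a 4" by (rule weighted_ord_ge_4_if_bipoly_bounded)
  then show "g \<in> I_pl p l"
    unfolding I_pl_def using B a \<open>g \<in> H4 \<and> _\<close> by (auto simp: weighted_ord_ge_4_iff ord_ge_2_iff)
qed

lemma subspace_I_pt:
  assumes "coords_at s B"
  shows "module.subspace fscale (I_pt s)"
proof -
  have "I_pt s = H4 \<inter> {g. chart_bounded g B (\<lambda>x y. x^2 + y^2)}"
    using I_pt_iff_chart_bounded[OF assms] by blast
  then show ?thesis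
    using module.subspace_inter[OF module_fscale subspace_H4 subspace_chart_bounded] by simp
qed

lemma subspace_I_pl:
  assumes "coords_at_line p l B"
  shows "module.subspace fscale (I_pl p l)"
proof -
  have "I_pl p l = H4 \<inter> {g. chart_bounded g B (\<lambda>x y. x^4 + y^2)}"
    using I_pl_iff_chart_bounded[OF assms] by blast
  then show ?thesis
    using module.subspace_inter[OF module_fscale subspace_H4 subspace_chart_bounded] by simp
qed

lemma F_pt_eq_I_pt_Int_P34:
  assumes "coords_at s B"
  shows "F_pt s = I_pt s \<inter> P34"
proof (intro equalityI subsetI)
  fix g assume "g \<in> F_pt s"
  then have g: "g \<in> H4" "g \<in> P34" "g s = 0" and nonneg: "\<And>v. 0 \<le> g v"
    by (auto simp: F_pt_def P34_def)
  obtain a where a: "local_coeffs g B a" using local_coeffs_exist[OF g(1)] by blast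
  have "a 0 0 = 0" using local_coeffs_center[OF g(1) assms a] g(3) by simp
  with local_coeffs_nonneg[OF a nonneg] have "ord_ge a 2" by (rule bipoly_nonneg_ord_ge_2)
  then show "g \<in> I_pt s \<inter> P34" using assms a g unfolding I_pt_def by blast
next
  fix g assume "g \<in> I_pt s \<inter> P34"
  then obtain B' a where "g \<in> P34" "g \<in> H4" "coords_at s B'" "local_coeffs g B' a" "ord_ge a 2"
    unfolding I_pt_def by blast
  then show "g \<in> F_pt s" using local_coeffs_center unfolding F_pt_def ord_ge_2_iff by blast
qed

lemma tilde_0_0: "tilde a 0 0 = a 2 0"
  by (simp add: tilde_def hpart_def eval_nat_numeral atMost_Suc)

lemma F_pl_eq_I_pl_Int_P34: "F_pl p l = I_pl p l \<inter> P34"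
proof (intro equalityI subsetI)
  fix g assume "g \<in> F_pl p l"
  then obtain B a where g: "g \<in> H4" "g \<in> P34" "g p = 0" and nonneg: "\<And>v. 0 \<le> g v"
    and B: "coords_at_line p l B" and a: "local_coeffs g B a" "tilde a 0 0 = 0"
    unfolding F_pl_def P34_def by blast
  note bipoly_nonneg = local_coeffs_nonneg[OF a(1) nonneg]
  have "a 0 0 = 0" using local_coeffs_center[OF g(1) _ a(1)] B g(3) unfolding coords_at_line_def by blast
  with bipoly_nonneg have "ord_ge a 2" by (rule bipoly_nonneg_ord_ge_2)
  moreover have "a 2 0 = 0" using a(2) by (simp add: tilde_0_0)
  ultimately have "weighted_ord_ge a 4" by (rule bipoly_nonneg_weighted_ord_ge_4[OF bipoly_nonneg])
  then show "g \<in> I_pl p l \<inter> P34"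
    using B a g unfolding I_pl_def weighted_ord_ge_4_iff ord_ge_2_iff by blast
next
  fix g assume "g \<in> I_pl p l \<inter> P34"
  then obtain B a where g: "g \<in> P34" "g \<in> H4" and B: "coords_at_line p l B"
    and a: "local_coeffs g B a" "a 0 0 = 0" "a 2 0 = 0"
    unfolding I_pl_def by blast
  have "g p = 0" using local_coeffs_center[OF g(2) _ a(1)] a(2) B unfolding coords_at_line_def by blast
  then show "g \<in> F_pl p l" unfolding F_pl_def using g B a by (auto simp: tilde_0_0)
qed

lemma F_S_eq_I_S_Int_P34:
  assumes "\<forall>i<n. \<exists>B. coords_at (s i) B"
  shows "F_S n s m p l = I_S n s m p l \<inter> P34"
proof -
  have "F_pt (s i) = I_pt (s i) \<inter> P34" if "i < n" for i
    using assms that F_pt_eq_I_pt_Int_P34 by blast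
  then show ?thesis
    unfolding F_S_def I_S_def F_pl_eq_I_pl_Int_P34 by (auto simp: P34_def)
qed

lemma subspace_I_S:
  assumes "\<forall>i<n. \<exists>B. coords_at (s i) B" "\<forall>j<m. \<exists>B. coords_at_line (p j) (l j) B"
  shows "module.subspace fscale (I_S n s m p l)"
proof -
  have "I_S n s m p l = H4 \<inter> (\<Inter>(I_pt ` s ` {..<n}) \<inter> \<Inter>((\<lambda>j. I_pl (p j) (l j)) ` {..<m}))"
    unfolding I_S_def by blast
  moreover have "module.subspace fscale (\<Inter>(I_pt ` s ` {..<n}))"
    using assms(1) subspace_I_pt by (blast intro: module.subspace_Inter[OF module_fscale])
  moreover have "module.subspace fscale (\<Inter>((\<lambda>j. I_pl (p j) (l j)) ` {..<m}))"
    using assms(2) subspace_I_pl by (blast intro: module.subspace_Inter[OF module_fscale])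
  ultimately show ?thesis
    by (simp add: module.subspace_inter[OF module_fscale] subspace_H4)
qed

section \<open>Nonnegative perturbations\<close>

definition nonneg_perturbable :: "(real^3 \<Rightarrow> real) \<Rightarrow> (real^3 \<Rightarrow> real) \<Rightarrow> real^3^3 \<Rightarrow> bool" where
  "nonneg_perturbable f g B \<longleftrightarrow> (\<exists>\<delta>>0. \<exists>\<epsilon>0>0. \<forall>x y \<epsilon>. \<bar>x\<bar> \<le> \<delta> \<longrightarrow> \<bar>y\<bar> \<le> \<delta> \<longrightarrow> 0 \<le> \<epsilon> \<longrightarrow> \<epsilon> \<le> \<epsilon>0 \<longrightarrow>
     0 \<le> f (B *v vector [x, y, 1]) + \<epsilon> * g (B *v vector [x, y, 1]))"

lemma nonneg_perturbable_if_dominated: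
  assumes "0 < c" "0 < \<delta>" and lower: "\<And>x y. \<bar>x\<bar> \<le> \<delta> \<Longrightarrow> \<bar>y\<bar> \<le> \<delta> \<Longrightarrow> c * \<rho> x y \<le> f (B *v vector [x, y, 1])"
    and "chart_bounded g B \<rho>" and \<rho>_nonneg: "\<And>x y. 0 \<le> \<rho> x y"
  shows "nonneg_perturbable f g B"
proof -
  obtain \<delta>' K where "0 < \<delta>'"
    and upper: "\<And>x y. \<bar>x\<bar> \<le> \<delta>' \<Longrightarrow> \<bar>y\<bar> \<le> \<delta>' \<Longrightarrow> \<bar>g (B *v vector [x, y, 1])\<bar> \<le> K * \<rho> x y"
    using \<open>chart_bounded g B \<rho>\<close> unfolding chart_bounded_def by blast
  define \<epsilon>0 where "\<epsilon>0 = c / (\<bar>K\<bar> + 1)"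
  have "0 < \<epsilon>0" "\<epsilon>0 * \<bar>K\<bar> \<le> c" using assms(1) by (simp_all add: \<epsilon>0_def field_simps)
  have "0 \<le> f (B *v vector [x, y, 1]) + \<epsilon> * g (B *v vector [x, y, 1])"
    if xy: "\<bar>x\<bar> \<le> min \<delta> \<delta>'" "\<bar>y\<bar> \<le> min \<delta> \<delta>'" and \<epsilon>: "0 \<le> \<epsilon>" "\<epsilon> \<le> \<epsilon>0" for x y \<epsilon>
  proof -
    have "\<bar>g (B *v vector [x, y, 1])\<bar> \<le> \<bar>K\<bar> * \<rho> x y"
      using upper[of x y] xy mult_right_mono[OF abs_ge_self \<rho>_nonneg[of x y], of K] by auto
    then have "\<epsilon> * \<bar>g (B *v vector [x, y, 1])\<bar> \<le> \<epsilon>0 * (\<bar>K\<bar> * \<rho> x y)" using \<epsilon> by (intro mult_mono) auto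
    also have "\<dots> \<le> c * \<rho> x y"
      using \<open>\<epsilon>0 * \<bar>K\<bar> \<le> c\<close> \<rho>_nonneg[of x y] by (simp add: mult.assoc[symmetric] mult_right_mono)
    also have "\<dots> \<le> f (B *v vector [x, y, 1])" using lower[of x y] xy by simp
    finally have "\<epsilon> * \<bar>g (B *v vector [x, y, 1])\<bar> \<le> f (B *v vector [x, y, 1])" .
    moreover have "\<epsilon> * - \<bar>g (B *v vector [x, y, 1])\<bar> \<le> \<epsilon> * g (B *v vector [x, y, 1])"
      using \<epsilon> by (intro mult_left_mono) auto
    ultimately show ?thesis by simp
  qed
  then show ?thesis unfolding nonneg_perturbable_def
    using \<open>0 < \<epsilon>0\<close> \<open>0 < \<delta>'\<close> assms(2) by (intro exI[of _ "min \<delta> \<delta>'"] conjI exI[of _ \<epsilon>0]) auto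
qed

lemma nonneg_perturbable_at_point:
  assumes f: "f \<in> F_pt s" and B: "coords_at s B" and a: "local_coeffs f B a" "inp a = {}"
    and g: "g \<in> I_pt s"
  shows "nonneg_perturbable f g B"
proof -
  have fH: "f \<in> H4" and nonneg: "\<And>v. 0 \<le> f v" and "f s = 0" using f by (auto simp: F_pt_def P34_def)
  then have "a 0 0 = 0" using local_coeffs_center[OF fH B a(1)] by simp
  with local_coeffs_nonneg[OF a(1) nonneg] have "ord_ge a 2" by (rule bipoly_nonneg_ord_ge_2)
  then obtain \<delta> c where lower: "0 < c" "0 < \<delta>"
    "\<And>x y. \<bar>x\<bar> \<le> \<delta> \<Longrightarrow> \<bar>y\<bar> \<le> \<delta> \<Longrightarrow> c * (x^2 + y^2) \<le> f (B *v vector [x, y, 1])"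
    using bipoly_ge_sq[OF local_coeffs_nonneg[OF a(1) nonneg] _ a(2)] local_coeffs_bipoly[OF a(1)] by metis
  moreover have "chart_bounded g B (\<lambda>x y. x^2 + y^2)" using g I_pt_iff_chart_bounded[OF B] by blast
  ultimately show ?thesis by (intro nonneg_perturbable_if_dominated[where \<rho>="\<lambda>x y. x^2 + y^2", OF lower]) auto
qed

lemma coeff_hpoly: "j \<le> k \<Longrightarrow> coeff (hpoly a k) j = a (k - j) j"
proof -
  assume jk: "j \<le> k"
  have "coeff (hpoly a k) j = (\<Sum>i\<le>k. if k - i = j then a i (k - i) else 0)"
    by (simp add: hpoly_def coeff_sum coeff_monom)
  also have "\<dots> = (\<Sum>i\<in>{k - j}. if k - i = j then a i (k - i) else 0)"
    by (rule sum.mono_neutral_right) (use jk in auto)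
  also have "\<dots> = a (k - j) j" using jk by simp
  finally show ?thesis .
qed

lemma disc_second_derivative_0:
  assumes "a 2 0 = 0" "a 1 1 = 0" "a 3 0 = 0"
  shows "poly (pderiv (pderiv (disc a))) 0 = 2 * ((a 2 1)^2 - 4 * a 0 2 * a 4 0)"
proof -
  have "poly (pderiv (pderiv (disc a))) 0 = 2 * coeff (disc a) 2"
    by (simp add: poly_0_coeff_0 coeff_pderiv numeral_2_eq_2)
  also have "coeff (disc a) 2 = (a 2 1)^2 - 4 * a 0 2 * a 4 0"
    using assms
    by (simp add: disc_def power2_eq_square coeff_mult coeff_hpoly eval_nat_numeral atMost_Suc algebra_simps)
  finally show ?thesis .
qed

lemma nonneg_perturbable_at_line:
  assumes f: "f \<in> F_pl p l" and B: "coords_at_line p l B" and a: "local_coeffs f B a"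
    and disc: "poly (pderiv (pderiv (disc a))) 0 \<noteq> 0" and g: "g \<in> I_pl p l"
  shows "nonneg_perturbable f g B"
proof -
  have nonneg: "\<And>v. 0 \<le> f v" using f by (auto simp: F_pl_def P34_def)
  have "chart_bounded f B (\<lambda>x y. x^4 + y^2)"
    using f F_pl_eq_I_pl_Int_P34 I_pl_iff_chart_bounded[OF B] by blast
  then obtain \<delta> K where "0 < \<delta>"
    "\<And>x y. \<bar>x\<bar> \<le> \<delta> \<Longrightarrow> \<bar>y\<bar> \<le> \<delta> \<Longrightarrow> \<bar>bipoly a x y\<bar> \<le> K * (x^4 + y^2)"
    unfolding chart_bounded_iff_bipoly[OF a] by blast
  then have w: "weighted_ord_ge a 4" by (rule weighted_ord_ge_4_if_bipoly_bounded)
  then have "(a 2 1)^2 \<noteq> 4 * a 0 2 * a 4 0"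
    using disc disc_second_derivative_0[of a] by (auto simp: weighted_ord_ge_4_iff)
  then obtain \<delta>' c where lower: "0 < c" "0 < \<delta>'"
    "\<And>x y. \<bar>x\<bar> \<le> \<delta>' \<Longrightarrow> \<bar>y\<bar> \<le> \<delta>' \<Longrightarrow> c * (x^4 + y^2) \<le> f (B *v vector [x, y, 1])"
    using bipoly_ge_weighted[OF local_coeffs_nonneg[OF a nonneg] w] local_coeffs_bipoly[OF a] by metis
  moreover have "chart_bounded g B (\<lambda>x y. x^4 + y^2)" using g I_pl_iff_chart_bounded[OF B] by blast
  ultimately show ?thesis by (intro nonneg_perturbable_if_dominated[where \<rho>="\<lambda>x y. x^4 + y^2", OF lower])
      (auto simp: add_nonneg_nonneg)
qed

definition chart_cone :: "real^3^3 \<Rightarrow> real \<Rightarrow> (real^3) set" where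
  "chart_cone C \<delta> = {v. \<bar>(matrix_inv C *v v)$1\<bar> < \<delta> * \<bar>(matrix_inv C *v v)$3\<bar> \<and>
                      \<bar>(matrix_inv C *v v)$2\<bar> < \<delta> * \<bar>(matrix_inv C *v v)$3\<bar>}"

lemma open_chart_cone: "open (chart_cone C \<delta>)"
  unfolding chart_cone_def Collect_conj_eq by (intro open_Int open_Collect_less continuous_intros)

lemma same_pt_center_in_chart_cone:
  assumes "invertible C" "0 < \<delta>" "same_pt v (C *v e3)"
  shows "v \<in> chart_cone C \<delta>"
proof -
  obtain c where "c \<noteq> 0" "v = c *\<^sub>R (C *v e3)" using assms(3) unfolding same_pt_def by blast
  then have "matrix_inv C *v v = c *\<^sub>R e3" by (simp add: matrix_vector_mult_scaleR matrix_inv_vec[OF assms(1)])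
  then show ?thesis using \<open>c \<noteq> 0\<close> assms(2) by (simp add: chart_cone_def vector_3)
qed

lemma H4_nonneg_on_chart_cone:
  assumes h: "h \<in> H4" and C: "invertible C" and v: "v \<in> chart_cone C \<delta>"
    and nonneg: "\<And>x y. \<bar>x\<bar> \<le> \<delta> \<Longrightarrow> \<bar>y\<bar> \<le> \<delta> \<Longrightarrow> 0 \<le> h (C *v vector [x, y, 1])"
  shows "0 \<le> h v"
proof -
  define X where "X = matrix_inv C *v v"
  have X: "\<bar>X$1\<bar> < \<delta> * \<bar>X$3\<bar>" "\<bar>X$2\<bar> < \<delta> * \<bar>X$3\<bar>" using v by (auto simp: chart_cone_def X_def)
  then have "X$3 \<noteq> 0" by auto
  have "\<bar>X$1 / X$3\<bar> \<le> \<delta>" "\<bar>X$2 / X$3\<bar> \<le> \<delta>"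
    using X \<open>X$3 \<noteq> 0\<close> by (simp_all add: abs_divide divide_le_eq)
  then have "0 \<le> (X$3)^4 * h (C *v vector [X$1 / X$3, X$2 / X$3, 1])" using nonneg by simp
  also have "\<dots> = h v"
    using H4_dehomogenize[OF h \<open>X$3 \<noteq> 0\<close>, of C] matrix_inv_vec(1)[OF C] by (simp add: X_def)
  finally show ?thesis .
qed

lemma compact_nonneg_perturbation:
  fixes f g :: "'a::topological_space \<Rightarrow> real"
  assumes "compact K" "continuous_on K f" "continuous_on K g" "\<And>v. v \<in> K \<Longrightarrow> 0 < f v"
  obtains \<epsilon>1 where "0 < \<epsilon>1" "\<And>\<epsilon> v. 0 \<le> \<epsilon> \<Longrightarrow> \<epsilon> \<le> \<epsilon>1 \<Longrightarrow> v \<in> K \<Longrightarrow> 0 \<le> f v + \<epsilon> * g v"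
proof (cases "K = {}")
  case True
  then show ?thesis using that[of 1] by auto
next
  case False
  obtain v0 where "v0 \<in> K" and min: "\<And>v. v \<in> K \<Longrightarrow> f v0 \<le> f v"
    using continuous_attains_inf[OF assms(1) False assms(2)] by blast
  obtain v1 where "v1 \<in> K" and max: "\<And>v. v \<in> K \<Longrightarrow> \<bar>g v\<bar> \<le> \<bar>g v1\<bar>"
    using continuous_attains_sup[OF assms(1) False continuous_on_rabs[OF assms(3)]] by blast
  define \<epsilon>1 where "\<epsilon>1 = f v0 / (\<bar>g v1\<bar> + 1)"
  have "0 < f v0" using assms(4) \<open>v0 \<in> K\<close> by blast
  show ?thesis
  proof (rule that)
    show "0 < \<epsilon>1" using \<open>0 < f v0\<close> by (simp add: \<epsilon>1_def)
    fix \<epsilon> v assume \<epsilon>: "0 \<le> \<epsilon>" "\<epsilon> \<le> \<epsilon>1" and "v \<in> K"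
    have "\<epsilon> * \<bar>g v\<bar> \<le> \<epsilon>1 * \<bar>g v1\<bar>" using \<epsilon> max[OF \<open>v \<in> K\<close>] by (intro mult_mono) auto
    also have "\<dots> \<le> f v0" using \<open>0 < f v0\<close> by (simp add: \<epsilon>1_def field_simps)
    also have "\<dots> \<le> f v" using min[OF \<open>v \<in> K\<close>] .
    finally have "\<epsilon> * \<bar>g v\<bar> \<le> f v" .
    moreover have "\<epsilon> * - \<bar>g v\<bar> \<le> \<epsilon> * g v" using \<epsilon> by (intro mult_left_mono) auto
    ultimately show "0 \<le> f v + \<epsilon> * g v" by simp
  qed
qed

lemma H4_nonneg_if_nonneg_on_sphere:
  assumes h: "h \<in> H4" and nonneg: "\<And>w. w \<in> sphere 0 1 \<Longrightarrow> 0 \<le> h w"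
  shows "0 \<le> h v"
proof (cases "v = 0")
  case True
  then show ?thesis using H4_at_zero[OF h] by simp
next
  case False
  define w where "w = (1 / norm v) *\<^sub>R v"
  have "v = norm v *\<^sub>R w" using False by (simp add: w_def)
  then have "h v = norm v ^ 4 * h w" using H4_scaleR[OF h] by metis
  moreover have "w \<in> sphere 0 1" using False by (simp add: w_def)
  ultimately show ?thesis using nonneg by simp
qed

lemma nonneg_perturbable_on_chart_cones:
  assumes f: "f \<in> H4" and g: "g \<in> H4"
    and charts: "\<And>C. C \<in> CS \<Longrightarrow> invertible C \<and> nonneg_perturbable f g C"
  obtains \<delta> \<epsilon>0 :: "real^3^3 \<Rightarrow> real" where "\<And>C. C \<in> CS \<Longrightarrow> 0 < \<delta> C \<and> 0 < \<epsilon>0 C"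
    "\<And>C \<epsilon> v. C \<in> CS \<Longrightarrow> 0 \<le> \<epsilon> \<Longrightarrow> \<epsilon> \<le> \<epsilon>0 C \<Longrightarrow> v \<in> chart_cone C (\<delta> C) \<Longrightarrow> 0 \<le> f v + \<epsilon> * g v"
proof -
  have "\<exists>d. 0 < fst d \<and> 0 < snd d \<and> (\<forall>\<epsilon> v. 0 \<le> \<epsilon> \<longrightarrow> \<epsilon> \<le> snd d \<longrightarrow> v \<in> chart_cone C (fst d) \<longrightarrow>
      0 \<le> f v + \<epsilon> * g v)" if C: "C \<in> CS" for C
  proof -
    obtain \<delta> \<epsilon>0 where "0 < \<delta>" "0 < \<epsilon>0" and local: "\<And>x y \<epsilon>. \<bar>x\<bar> \<le> \<delta> \<Longrightarrow> \<bar>y\<bar> \<le> \<delta> \<Longrightarrow> 0 \<le> \<epsilon> \<Longrightarrow>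
        \<epsilon> \<le> \<epsilon>0 \<Longrightarrow> 0 \<le> f (C *v vector [x, y, 1]) + \<epsilon> * g (C *v vector [x, y, 1])"
      using charts[OF C] unfolding nonneg_perturbable_def by blast
    have "0 \<le> f v + \<epsilon> * g v" if \<epsilon>: "0 \<le> \<epsilon>" "\<epsilon> \<le> \<epsilon>0" and v: "v \<in> chart_cone C \<delta>" for \<epsilon> v
    proof -
      have "0 \<le> (f + fscale \<epsilon> g) (C *v vector [x, y, 1])" if "\<bar>x\<bar> \<le> \<delta>" "\<bar>y\<bar> \<le> \<delta>" for x y
        using local[OF that \<epsilon>] by (simp add: fscale_def)
      from H4_nonneg_on_chart_cone[OF H4_add_fscale[OF f g] _ v this] charts[OF C]
      show ?thesis by (simp add: fscale_def)
    qed
    then show ?thesis using \<open>0 < \<delta>\<close> \<open>0 < \<epsilon>0\<close> by (intro exI[of _ "(\<delta>, \<epsilon>0)"]) simp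
  qed
  then have "\<forall>C\<in>CS. \<exists>d. 0 < fst d \<and> 0 < snd d \<and> (\<forall>\<epsilon> v. 0 \<le> \<epsilon> \<longrightarrow> \<epsilon> \<le> snd d \<longrightarrow>
      v \<in> chart_cone C (fst d) \<longrightarrow> 0 \<le> f v + \<epsilon> * g v)"
    by (rule ballI)
  then obtain d where d: "\<forall>C\<in>CS. 0 < fst (d C) \<and> 0 < snd (d C) \<and> (\<forall>\<epsilon> v. 0 \<le> \<epsilon> \<longrightarrow>
      \<epsilon> \<le> snd (d C) \<longrightarrow> v \<in> chart_cone C (fst (d C)) \<longrightarrow> 0 \<le> f v + \<epsilon> * g v)"
    by (rule bchoice[THEN exE])
  show ?thesis by (rule that[of "\<lambda>C. fst (d C)" "\<lambda>C. snd (d C)"]) (use d in auto)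
qed

text \<open>Near the zeros of \<open>f\<close> the charts give nonnegativity, and on the compact rest of the
  sphere \<open>f\<close> is bounded below by a positive constant.\<close>

lemma exists_nonneg_perturbation:
  fixes CS :: "(real^3^3) set"
  assumes f: "f \<in> H4" "\<And>v. 0 \<le> f v" and g: "g \<in> H4" and "finite CS"
    and charts: "\<And>C. C \<in> CS \<Longrightarrow> invertible C \<and> nonneg_perturbable f g C"
    and zeros: "\<And>v. v \<noteq> 0 \<Longrightarrow> f v = 0 \<Longrightarrow> \<exists>C\<in>CS. same_pt v (C *v e3)"
  shows "\<exists>\<epsilon>>0. \<forall>v. 0 \<le> f v + \<epsilon> * g v"
proof -
  obtain \<delta> \<epsilon>0 where pos: "\<And>C. C \<in> CS \<Longrightarrow> 0 < \<delta> C \<and> 0 < \<epsilon>0 C"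
    and near: "\<And>C \<epsilon> v. C \<in> CS \<Longrightarrow> 0 \<le> \<epsilon> \<Longrightarrow> \<epsilon> \<le> \<epsilon>0 C \<Longrightarrow> v \<in> chart_cone C (\<delta> C) \<Longrightarrow>
      0 \<le> f v + \<epsilon> * g v"
    using nonneg_perturbable_on_chart_cones[OF f(1) g charts] by blast
  define U where "U = (\<Union>C\<in>CS. chart_cone C (\<delta> C))"
  have compact: "compact (sphere 0 1 - U)"
    unfolding U_def by (intro compact_diff compact_sphere open_UN ballI open_chart_cone)
  have "0 < f w" if w: "w \<in> sphere 0 1 - U" for w
  proof -
    have "f w \<noteq> 0"
    proof
      assume "f w = 0"
      moreover have "w \<noteq> 0" using w by auto
      ultimately obtain C where "C \<in> CS" "same_pt w (C *v e3)" using zeros by blast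
      then have "w \<in> U" using same_pt_center_in_chart_cone charts pos unfolding U_def by blast
      then show False using w by blast
    qed
    then show ?thesis using f(2)[of w] by simp
  qed
  then obtain \<epsilon>1 where "0 < \<epsilon>1"
    and far: "\<And>\<epsilon> w. 0 \<le> \<epsilon> \<Longrightarrow> \<epsilon> \<le> \<epsilon>1 \<Longrightarrow> w \<in> sphere 0 1 - U \<Longrightarrow> 0 \<le> f w + \<epsilon> * g w"
    using compact_nonneg_perturbation[OF compact H4_continuous_on[OF f(1)] H4_continuous_on[OF g]]
    by blast
  define \<epsilon> where "\<epsilon> = Min (insert \<epsilon>1 (\<epsilon>0 ` CS))"
  have \<epsilon>: "0 < \<epsilon>" "\<epsilon> \<le> \<epsilon>1" "\<And>C. C \<in> CS \<Longrightarrow> \<epsilon> \<le> \<epsilon>0 C"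
    using \<open>finite CS\<close> \<open>0 < \<epsilon>1\<close> pos by (simp_all add: \<epsilon>_def)
  have "0 \<le> (f + fscale \<epsilon> g) w" if "w \<in> sphere 0 1" for w
  proof (cases "w \<in> U")
    case True
    then obtain C where "C \<in> CS" "w \<in> chart_cone C (\<delta> C)" by (auto simp: U_def)
    then show ?thesis using near \<epsilon>(1,3) by (simp add: fscale_def)
  next
    case False
    with that have "w \<in> sphere 0 1 - U" by blast
    with far[OF less_imp_le[OF \<epsilon>(1)] \<epsilon>(2)] show ?thesis by (simp add: fscale_def)
  qed
  then have "0 \<le> (f + fscale \<epsilon> g) v" for v by (rule H4_nonneg_if_nonneg_on_sphere[OF H4_add_fscale[OF f(1) g]])
  then show ?thesis using \<epsilon>(1) unfolding fscale_def plus_fun_def by blast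
qed

lemma same_pt_chart_center:
  assumes "coords_at p B" "same_pt v p"
  shows "same_pt v (B *v e3)"
proof -
  obtain c d where "c \<noteq> 0" "B *v e3 = c *\<^sub>R p" "d \<noteq> 0" "v = d *\<^sub>R p"
    using assms unfolding coords_at_def same_pt_def by blast
  then have "v = (d / c) *\<^sub>R (B *v e3)" by simp
  then show ?thesis using \<open>c \<noteq> 0\<close> \<open>d \<noteq> 0\<close> unfolding same_pt_def by (intro exI[of _ "d / c"]) simp
qed

lemma configuration_nonneg_perturbation:
  assumes f: "f \<in> F_S n s m p l"
    and zeros: "zero_set f = {v. v \<noteq> 0 \<and> ((\<exists>i<n. same_pt v (s i)) \<or> (\<exists>j<m. same_pt v (p j)))}"
    and points: "\<forall>i<n. \<exists>B a. coords_at (s i) B \<and> local_coeffs f B a \<and> inp a = {}"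
    and lines: "\<forall>j<m. \<exists>B a. coords_at_line (p j) (l j) B \<and> local_coeffs f B a \<and>
                poly (pderiv (pderiv (disc a))) 0 \<noteq> 0"
    and g: "g \<in> I_S n s m p l"
  shows "\<exists>\<epsilon>>0. \<forall>v. 0 \<le> f v + \<epsilon> * g v"
proof -
  obtain Bs as where Bs: "\<And>i. i < n \<Longrightarrow> coords_at (s i) (Bs i) \<and> local_coeffs f (Bs i) (as i) \<and>
      inp (as i) = {}"
    using points by metis
  obtain Bp ap where Bp: "\<And>j. j < m \<Longrightarrow> coords_at_line (p j) (l j) (Bp j) \<and>
      local_coeffs f (Bp j) (ap j) \<and> poly (pderiv (pderiv (disc (ap j)))) 0 \<noteq> 0"
    using lines by metis
  have fP: "f \<in> H4" "\<And>v. 0 \<le> f v" and gH: "g \<in> H4"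
    using f g by (auto simp: F_S_def I_S_def P34_def)
  show ?thesis
  proof (rule exists_nonneg_perturbation[OF fP gH, of "Bs ` {..<n} \<union> Bp ` {..<m}"])
    fix C assume "C \<in> Bs ` {..<n} \<union> Bp ` {..<m}"
    then consider i where "i < n" "C = Bs i" | j where "j < m" "C = Bp j" by blast
    then show "invertible C \<and> nonneg_perturbable f g C"
    proof cases
      case 1
      then show ?thesis
        using Bs[of i] f g nonneg_perturbable_at_point
        by (auto simp: coords_at_def F_S_def I_S_def)
    next
      case 2
      then show ?thesis
        using Bp[of j] f g nonneg_perturbable_at_line
        by (auto simp: coords_at_line_def coords_at_def F_S_def I_S_def)
    qed
  next
    fix v assume "v \<noteq> 0" "f v = 0"
    then have "(\<exists>i<n. same_pt v (s i)) \<or> (\<exists>j<m. same_pt v (p j))"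
      using zeros unfolding zero_set_def by blast
    then show "\<exists>C\<in>Bs ` {..<n} \<union> Bp ` {..<m}. same_pt v (C *v e3)"
      using Bs Bp same_pt_chart_center unfolding coords_at_line_def by blast
  qed simp
qed

lemma fspan_eq_of_perturbations:
  assumes I: "module.subspace fscale I" and "F \<subseteq> I" "f \<in> F"
    and perturb: "\<And>g. g \<in> I \<Longrightarrow> \<exists>\<epsilon>. \<epsilon> \<noteq> 0 \<and> f + fscale \<epsilon> g \<in> F"
  shows "fspan F = I"
  unfolding fspan_def
proof (rule module.span_subspace[OF module_fscale \<open>F \<subseteq> I\<close> _ I], rule subsetI)
  fix g assume "g \<in> I"
  then obtain \<epsilon> where "\<epsilon> \<noteq> 0" "f + fscale \<epsilon> g \<in> F" using perturb by blast
  then have "fscale (1 / \<epsilon>) ((f + fscale \<epsilon> g) - f) \<in> module.span fscale F"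
    using \<open>f \<in> F\<close> by (intro module.span_scale[OF module_fscale] module.span_diff[OF module_fscale]
        module.span_base[OF module_fscale])
  moreover have "fscale (1 / \<epsilon>) ((f + fscale \<epsilon> g) - f) = g"
    using \<open>\<epsilon> \<noteq> 0\<close> by (simp add: fscale_def fun_eq_iff)
  ultimately show "g \<in> module.span fscale F" by simp
qed

theorem mainTheorem4:
  fixes n m :: nat and s p l :: "nat \<Rightarrow> real^3" and f :: "real^3 \<Rightarrow> real"
  assumes conf: "configuration n s m p l"
    and fF: "f \<in> F_S n s m p l"
    and h1: "zero_set f = {v. v \<noteq> 0 \<and> ((\<exists>i<n. same_pt v (s i)) \<or> (\<exists>j<m. same_pt v (p j)))}"
    and h2: "\<forall>i<n. \<exists>B a. coords_at (s i) B \<and> local_coeffs f B a \<and> inp a = {}"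
    and h3: "\<forall>j<m. \<exists>B a. coords_at (p j) B \<and> local_coeffs f B a \<and> ord_is a 2"
    and h4: "\<forall>j<m. \<exists>B a. coords_at_line (p j) (l j) B \<and> local_coeffs f B a \<and>
                poly (pderiv (pderiv (disc a))) 0 \<noteq> 0"
  shows "fspan (F_S n s m p l) = I_S n s m p l \<and>
         fdim (I_S n s m p l) = fdim (F_S n s m p l)"
proof -
  have charts: "\<forall>i<n. \<exists>B. coords_at (s i) B" "\<forall>j<m. \<exists>B. coords_at_line (p j) (l j) B"
    using h2 h4 by blast+
  have F_eq: "F_S n s m p l = I_S n s m p l \<inter> P34" by (rule F_S_eq_I_S_Int_P34[OF charts(1)])
  have I: "module.subspace fscale (I_S n s m p l)" by (rule subspace_I_S[OF charts])
  have "fspan (F_S n s m p l) = I_S n s m p l"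
  proof (rule fspan_eq_of_perturbations[OF I _ fF])
    show "F_S n s m p l \<subseteq> I_S n s m p l" using F_eq by blast
    fix g assume g: "g \<in> I_S n s m p l"
    obtain \<epsilon> where "0 < \<epsilon>" and nonneg: "\<forall>v. 0 \<le> f v + \<epsilon> * g v"
      using configuration_nonneg_perturbation[OF fF h1 h2 h4 g] by blast
    have "f + fscale \<epsilon> g \<in> I_S n s m p l"
      using I fF F_eq g unfolding module.subspace_def[OF module_fscale] by blast
    moreover from this nonneg have "f + fscale \<epsilon> g \<in> P34"
      by (simp add: P34_def I_S_def fscale_def)
    ultimately show "\<exists>\<epsilon>. \<epsilon> \<noteq> 0 \<and> f + fscale \<epsilon> g \<in> F_S n s m p l"
      using F_eq \<open>0 < \<epsilon>\<close> by (intro exI[of _ \<epsilon>]) auto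
  qed
  moreover from this have "fdim (I_S n s m p l) = fdim (F_S n s m p l)"
    unfolding fdim_def fspan_def by (metis vector_space.dim_span[OF vector_space_fscale])
  ultimately show ?thesis ..
qed

end
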